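(* Let $m,\varepsilon>0$ and write $\widetilde{A}_k(x,t)=\widetilde{A}_k(x,t,m,\varepsilon)$. For each $(x,t)\in\varepsilon\mathbb{Z}^2$, $$2m\varepsilon x\,\widetilde{A}_1(x,t)=(x-t-\varepsilon)\widetilde{A}_2(x-\varepsilon,t)-(x-t+\varepsilon)\widetilde{A}_2(x+\varepsilon,t),$$ $$2m\varepsilon x\,\widetilde{A}_2(x,t)=(x+t)\widetilde{A}_1(x-\varepsilon,t)-(x+t)\widetilde{A}_1(x+\varepsilon,t).$$
   Context: $\delta_{xy}$ is the Kronecker delta. For $\delta\in(0,1)$ let $A_k(x,t)=A_k(x,t,m,\varepsilon,\delta)$, $k\in\{1,2\}$, be the unique pair of complex-valued functions on $\{(x,t)\in\mathbb{R}^2:2x/\varepsilon,2t/\varepsilon,(x+t)/\varepsilon\in\mathbb{Z}\}$ satisfying: (1) for $2x/\varepsilon,2t/\varepsilon$ even, $A_1(x,t)=\frac{1}{\sqrt{1+m^2\varepsilon^2}}(A_1(x+\frac{\varepsilon}{2},t-\frac{\varepsilon}{2})+m\varepsilon A_2(x+\frac{\varepsilon}{2},t-\frac{\varepsilon}{2}))$ and $A_2(x,t)=\frac{1}{\sqrt{1+m^2\varepsilon^2}}(A_2(x-\frac{\varepsilon}{2},t-\frac{\varepsilon}{2})-m\varepsilon A_1(x-\frac{\varepsilon}{2},t-\frac{\varepsilon}{2}))+2\delta_{x0}\delta_{t0}$; (2) for $2x/\varepsilon,2t/\varepsilon$ odd, $A_1(x,t)=\frac{1}{\sqrt{1-\delta^2}}(A_1(x+\frac{\varepsilon}{2},t-\frac{\varepsilon}{2})-i\delta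 A_2(x+\frac{\varepsilon}{2},t-\frac{\varepsilon}{2}))$ and $A_2(x,t)=\frac{1}{\sqrt{1-\delta^2}}(A_2(x-\frac{\varepsilon}{2},t-\frac{\varepsilon}{2})+i\delta A_1(x-\frac{\varepsilon}{2},t-\frac{\varepsilon}{2}))$; (3) $\sum_{(x,t)\in\varepsilon\mathbb{Z}^2}(|A_1|^2+|A_2|^2)<\infty$ (existence and uniqueness are known). $\widetilde{A}_k(x,t,m,\varepsilon):=\lim_{\delta\searrow0}A_k(x,t,m,\varepsilon,\delta)$ for $(x,t)\in\varepsilon\mathbb{Z}^2$ (known to exist). *)

theory Defs
  imports "HOL-Analysis.Analysis"
begin

definition lattice_pt :: "real \<Rightarrow> real \<Rightarrow> real \<Rightarrow> bool" where
  "lattice_pt eps x t \<longleftrightarrow>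
     2 * x / eps \<in> \<int> \<and> 2 * t / eps \<in> \<int> \<and> (x + t) / eps \<in> \<int>"

definition even_pt :: "real \<Rightarrow> real \<Rightarrow> real \<Rightarrow> bool" where
  "even_pt eps x t \<longleftrightarrow>
     (\<exists>j s :: int. 2 * x / eps = of_int j \<and> 2 * t / eps = of_int s \<and> even j \<and> even s)"

definition odd_pt :: "real \<Rightarrow> real \<Rightarrow> real \<Rightarrow> bool" where
  "odd_pt eps x t \<longleftrightarrow>
     (\<exists>j s :: int. 2 * x / eps = of_int j \<and> 2 * t / eps = of_int s \<and> odd j \<and> odd s)"

text \<open>The defining conditions (1)-(3). Functions are modelled on all of real x real,
  with the convention that they vanish off the lattice (so the solution is unique
  as a pair of HOL functions).\<close>
definition is_sol ::
  "real \<Rightarrow> real \<Rightarrow> real \<Rightarrow> (real \<Rightarrow> real \<Rightarrow> complex) \<Rightarrow> (real \<Rightarrow> real \<Rightarrow> complex) \<Rightarrow> bool" where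
  "is_sol m eps \<delta> A1 A2 \<longleftrightarrow>
     (\<forall>x t. \<not> lattice_pt eps x t \<longrightarrow> A1 x t = 0 \<and> A2 x t = 0) \<and>
     (\<forall>x t. lattice_pt eps x t \<and> even_pt eps x t \<longrightarrow>
        A1 x t = of_real (1 / sqrt (1 + m\<^sup>2 * eps\<^sup>2)) *
          (A1 (x + eps/2) (t - eps/2) + of_real (m * eps) * A2 (x + eps/2) (t - eps/2)) \<and>
        A2 x t = of_real (1 / sqrt (1 + m\<^sup>2 * eps\<^sup>2)) *
          (A2 (x - eps/2) (t - eps/2) - of_real (m * eps) * A1 (x - eps/2) (t - eps/2))
          + (if x = 0 \<and> t = 0 then 2 else 0)) \<and>
     (\<forall>x t. lattice_pt eps x t \<and> odd_pt eps x t \<longrightarrow>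
        A1 x t = of_real (1 / sqrt (1 - \<delta>\<^sup>2)) *
          (A1 (x + eps/2) (t - eps/2) - \<i> * of_real \<delta> * A2 (x + eps/2) (t - eps/2)) \<and>
        A2 x t = of_real (1 / sqrt (1 - \<delta>\<^sup>2)) *
          (A2 (x - eps/2) (t - eps/2) + \<i> * of_real \<delta> * A1 (x - eps/2) (t - eps/2))) \<and>
     (\<lambda>(x, t). (cmod (A1 x t))\<^sup>2 + (cmod (A2 x t))\<^sup>2) summable_on
        {(x, t). x / eps \<in> \<int> \<and> t / eps \<in> \<int>}"

definition A_pair ::
  "real \<Rightarrow> real \<Rightarrow> real \<Rightarrow> (real \<Rightarrow> real \<Rightarrow> complex) \<times> (real \<Rightarrow> real \<Rightarrow> complex)" where
  "A_pair m eps \<delta> = (THE p. is_sol m eps \<delta> (fst p) (snd p))"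

definition A1 :: "real \<Rightarrow> real \<Rightarrow> real \<Rightarrow> real \<Rightarrow> real \<Rightarrow> complex" where
  "A1 x t m eps \<delta> = fst (A_pair m eps \<delta>) x t"

definition A2 :: "real \<Rightarrow> real \<Rightarrow> real \<Rightarrow> real \<Rightarrow> real \<Rightarrow> complex" where
  "A2 x t m eps \<delta> = snd (A_pair m eps \<delta>) x t"

definition At1 :: "real \<Rightarrow> real \<Rightarrow> real \<Rightarrow> real \<Rightarrow> complex" where
  "At1 x t m eps = Lim (at_right 0) (\<lambda>\<delta>. A1 x t m eps \<delta>)"

definition At2 :: "real \<Rightarrow> real \<Rightarrow> real \<Rightarrow> real \<Rightarrow> complex" where
  "At2 x t m eps = Lim (at_right 0) (\<lambda>\<delta>. A2 x t m eps \<delta>)"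

end

theory Submission
  imports Defs
begin

text \<open>
  For \<open>\<delta> > 0\<close> the solution is constructed by a Fourier transform in space. On the sublattice
  \<open>\<epsilon> \<int>\<^sup>2\<close> one time step acts on the spatial transform as a \<open>2 \<times> 2\<close> matrix of determinant 1
  whose eigenvalues satisfy \<open>|lam| < 1 < |mu|\<close>; the transform at time \<open>s\<close> is \<open>lam\<^bsup>|s|\<^esup>\<close> times an
  eigenvector (for \<open>lam\<close> if \<open>s \<ge> 0\<close>, for \<open>mu\<close> if \<open>s < 0\<close>), the jump between the two
  eigenvectors being the source term. This decays geometrically in \<open>s\<close>, so by Bessel's inequality
  the lattice values are square summable. Uniqueness among square-summable solutions follows by
  pairing the difference of two solutions with decaying solutions of the adjoint recurrence: the
  pairing is constant in time but becomes arbitrarily small.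

  The lattice values are Fourier coefficients depending continuously on \<open>\<delta>\<close>, so the limit
  \<open>\<delta> \<rightarrow> 0\<close> is given by the coefficients at \<open>\<delta> = 0\<close>, where the transform is explicit. The claimed
  identities are the Fourier-coefficient form of two first-order differential identities in the
  frequency \<open>k\<close>, obtained by integrating by parts.
\<close>

section \<open>Fourier coefficients on the circle\<close>

text \<open>With this sign convention a continuous \<open>F\<close> is formally
  \<open>\<Sum>j. fourier_coeff F j * cis (- j * k)\<close>.\<close>
definition fourier_coeff :: "(real \<Rightarrow> complex) \<Rightarrow> int \<Rightarrow> complex" where
  "fourier_coeff F j = integral {-pi..pi} (\<lambda>k. cis (of_int j * k) * F k) / (2 * pi)"

lemma cis_int_mult_pi: "cis (of_int j * pi) = cis (- (of_int j * pi))"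
  by (simp add: cis.ctr complex_eq_iff sin_zero_iff_int2)

lemma has_vector_derivative_cis_linear:
  "((\<lambda>k. cis (a * k)) has_vector_derivative (\<i> * of_real a) * cis (a * x)) (at x within S)"
  unfolding cis_conv_exp
  by (auto intro!: derivative_eq_intros has_vector_derivative_real_field simp: field_simps)

lemma integral_cis_int:
  "integral {-pi..pi} (\<lambda>k. cis (of_int j * k)) = (if j = 0 then 2 * pi else 0)"
proof (cases "j = 0")
  case True
  then show ?thesis by (simp add: scaleR_conv_of_real)
next
  case False
  have "((\<lambda>k. cis (of_int j * k) / (\<i> * of_int j)) has_vector_derivative cis (of_int j * x))
          (at x within {-pi..pi})" for x
    using has_vector_derivative_divide[OF has_vector_derivative_cis_linear[of "of_int j" x],
        of "\<i> * of_int j"] False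
    by simp
  then have "((\<lambda>k. cis (of_int j * k)) has_integral
      (cis (of_int j * pi) / (\<i> * of_int j) - cis (of_int j * (-pi)) / (\<i> * of_int j))) {-pi..pi}"
    by (intro fundamental_theorem_of_calculus) auto
  then show ?thesis
    using False cis_int_mult_pi[of j] by (simp add: integral_unique)
qed

lemma integrable_cis_mult:
  "continuous_on {-pi..pi} F \<Longrightarrow> (\<lambda>k. cis (a * k) * F k) integrable_on {-pi..pi}"
  by (intro integrable_continuous_interval continuous_intros)

lemma fourier_coeff_add:
  "continuous_on {-pi..pi} F \<Longrightarrow> continuous_on {-pi..pi} G \<Longrightarrow>
     fourier_coeff (\<lambda>k. F k + G k) j = fourier_coeff F j + fourier_coeff G j"
  unfolding fourier_coeff_def using integrable_cis_mult[of F] integrable_cis_mult[of G]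
  by (simp add: distrib_left integral_add add_divide_distrib)

lemma fourier_coeff_cmult: "fourier_coeff (\<lambda>k. c * F k) j = c * fourier_coeff F j"
  unfolding fourier_coeff_def by (simp add: mult.left_commute)

lemma fourier_coeff_sum:
  "finite J \<Longrightarrow> (\<And>i. i \<in> J \<Longrightarrow> continuous_on {-pi..pi} (F i)) \<Longrightarrow>
     fourier_coeff (\<lambda>k. \<Sum>i\<in>J. F i k) j = (\<Sum>i\<in>J. fourier_coeff (F i) j)"
  unfolding fourier_coeff_def
  by (simp add: sum_distrib_left integral_sum integrable_cis_mult sum_divide_distrib)

lemma fourier_coeff_cis_mult:
  "fourier_coeff (\<lambda>k. cis (of_int l * k) * F k) j = fourier_coeff F (j + l)"
  unfolding fourier_coeff_def by (simp add: mult.assoc[symmetric] cis_mult distrib_right)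

lemma fourier_coeff_const: "fourier_coeff (\<lambda>k. c) j = (if j = 0 then c else 0)"
proof -
  have "fourier_coeff (\<lambda>k. c) j = c * (integral {-pi..pi} (\<lambda>k. cis (of_int j * k)) / (2 * pi))"
    unfolding fourier_coeff_def by (simp add: mult.commute)
  then show ?thesis by (simp add: integral_cis_int)
qed

lemma fourier_coeff_monomial:
  "fourier_coeff (\<lambda>k. cis (- (of_int l * k)) * c) j = (if j = l then c else 0)"
  using fourier_coeff_cis_mult[of "- l" "\<lambda>k. c" j] by (simp add: fourier_coeff_const)

lemma fourier_coeff_stencil:
  assumes "continuous_on {-pi..pi} G"
  shows "fourier_coeff (\<lambda>k. (a * cis k + b + c * cis (- k)) * G k) j
       = a * fourier_coeff G (j + 1) + b * fourier_coeff G j + c * fourier_coeff G (j - 1)"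
proof -
  have cont: "continuous_on {-pi..pi} (\<lambda>k. a * (cis k * G k))"
    "continuous_on {-pi..pi} (\<lambda>k. b * G k)"
    "continuous_on {-pi..pi} (\<lambda>k. c * (cis (- k) * G k))"
    by (intro continuous_intros assms)+
  have "fourier_coeff (\<lambda>k. cis k * G k) j = fourier_coeff G (j + 1)"
    "fourier_coeff (\<lambda>k. cis (- k) * G k) j = fourier_coeff G (j - 1)"
    using fourier_coeff_cis_mult[of 1 G j] fourier_coeff_cis_mult[of "- 1" G j] by simp_all
  moreover have "(\<lambda>k. (a * cis k + b + c * cis (- k)) * G k)
      = (\<lambda>k. (a * (cis k * G k) + b * G k) + c * (cis (- k) * G k))"
    by (simp add: algebra_simps)
  ultimately show ?thesis
    using cont by (simp add: fourier_coeff_add continuous_on_add fourier_coeff_cmult)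
qed

lemma fourier_coeff_trig_poly:
  assumes "finite J"
  shows "fourier_coeff (\<lambda>k. \<Sum>l\<in>J. cis (- (of_int l * k)) * a l) j = (if j \<in> J then a j else 0)"
proof -
  have "fourier_coeff (\<lambda>k. \<Sum>l\<in>J. cis (- (of_int l * k)) * a l) j
      = (\<Sum>l\<in>J. if j = l then a l else 0)"
    using assms by (subst fourier_coeff_sum) (auto simp: fourier_coeff_monomial intro!: continuous_intros)
  then show ?thesis using assms by (simp add: sum.delta)
qed

lemma integral_mult_cnj_trig_poly:
  assumes "continuous_on {-pi..pi} F" and "finite J"
  shows "integral {-pi..pi} (\<lambda>k. F k * cnj (\<Sum>l\<in>J. cis (- (of_int l * k)) * a l))
       = 2 * pi * (\<Sum>l\<in>J. cnj (a l) * fourier_coeff F l)"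
proof -
  have "integral {-pi..pi} (\<lambda>k. F k * cnj (\<Sum>l\<in>J. cis (- (of_int l * k)) * a l))
      = integral {-pi..pi} (\<lambda>k. \<Sum>l\<in>J. cnj (a l) * (cis (of_int l * k) * F k))"
    by (simp add: sum_distrib_left cis_cnj mult_ac)
  also have "\<dots> = (\<Sum>l\<in>J. cnj (a l) * integral {-pi..pi} (\<lambda>k. cis (of_int l * k) * F k))"
    using assms by (subst integral_sum) (auto intro!: integrable_continuous_interval continuous_intros)
  finally show ?thesis
    by (simp add: fourier_coeff_def sum_distrib_left mult_ac)
qed

lemma integral_norm_square:
  assumes "continuous_on {-pi..pi} G"
  shows "of_real (integral {-pi..pi} (\<lambda>k. (cmod (G k))\<^sup>2))
       = integral {-pi..pi} (\<lambda>k. G k * cnj (G k))"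
proof -
  have "((\<lambda>k. (cmod (G k))\<^sup>2) has_integral integral {-pi..pi} (\<lambda>k. (cmod (G k))\<^sup>2)) {-pi..pi}"
    by (intro integrable_integral integrable_continuous_interval continuous_intros assms)
  from has_integral_of_real[OF this, where 'b = complex]
  have "((\<lambda>k. G k * cnj (G k)) has_integral of_real (integral {-pi..pi} (\<lambda>k. (cmod (G k))\<^sup>2)))
          {-pi..pi}"
    by (simp only: complex_norm_square)
  then show ?thesis by (simp add: integral_unique)
qed

lemma bessel_inequality:
  assumes cont: "continuous_on {-pi..pi} F" and "finite J"
  shows "(\<Sum>j\<in>J. (cmod (fourier_coeff F j))\<^sup>2)
       \<le> integral {-pi..pi} (\<lambda>k. (cmod (F k))\<^sup>2) / (2 * pi)"
proof -
  define S where "S = (\<Sum>j\<in>J. (cmod (fourier_coeff F j))\<^sup>2)"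
  define Q where "Q k = (\<Sum>l\<in>J. cis (- (of_int l * k)) * fourier_coeff F l)" for k
  have contQ: "continuous_on {-pi..pi} Q"
    unfolding Q_def by (intro continuous_intros)
  have sum_S: "(\<Sum>l\<in>J. cnj (fourier_coeff F l) * fourier_coeff F l) = of_real S"
    unfolding S_def of_real_sum complex_norm_square by (simp only: mult.commute)
  have FQ: "integral {-pi..pi} (\<lambda>k. F k * cnj (Q k)) = of_real (2 * pi * S)"
    unfolding Q_def using integral_mult_cnj_trig_poly[OF cont \<open>finite J\<close>] sum_S by simp
  have QQ: "integral {-pi..pi} (\<lambda>k. Q k * cnj (Q k)) = of_real (2 * pi * S)"
    using integral_mult_cnj_trig_poly[OF contQ \<open>finite J\<close>, of "fourier_coeff F"] sum_S
    unfolding Q_def fourier_coeff_trig_poly[OF \<open>finite J\<close>] by simp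
  have QF: "integral {-pi..pi} (\<lambda>k. Q k * cnj (F k)) = of_real (2 * pi * S)"
    using arg_cong[OF FQ, of cnj] by (simp add: integral_cnj mult.commute)
  have "of_real (integral {-pi..pi} (\<lambda>k. (cmod (F k - Q k))\<^sup>2))
      = integral {-pi..pi} (\<lambda>k. F k * cnj (F k) - F k * cnj (Q k) - Q k * cnj (F k)
                                 + Q k * cnj (Q k))"
    using cont contQ by (subst integral_norm_square) (auto intro!: continuous_intros simp: algebra_simps)
  also have "\<dots> = integral {-pi..pi} (\<lambda>k. F k * cnj (F k)) - of_real (2 * pi * S)"
    using cont contQ FQ QF QQ
    by (subst integral_add integral_diff; (auto intro!: integrable_continuous_interval continuous_intros)?)+
  also have "\<dots> = of_real (integral {-pi..pi} (\<lambda>k. (cmod (F k))\<^sup>2) - 2 * pi * S)"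
    using cont by (simp add: integral_norm_square)
  finally have "integral {-pi..pi} (\<lambda>k. (cmod (F k - Q k))\<^sup>2)
      = integral {-pi..pi} (\<lambda>k. (cmod (F k))\<^sup>2) - 2 * pi * S"
    by (simp only: of_real_eq_iff)
  moreover have "0 \<le> integral {-pi..pi} (\<lambda>k. (cmod (F k - Q k))\<^sup>2)"
    by (intro integral_nonneg integrable_continuous_interval continuous_intros cont contQ) auto
  ultimately show ?thesis by (simp add: S_def field_simps)
qed

lemma integral_norm_square_le:
  assumes "continuous_on {-pi..pi} F" and "\<And>k. k \<in> {-pi..pi} \<Longrightarrow> cmod (F k) \<le> C"
  shows "integral {-pi..pi} (\<lambda>k. (cmod (F k))\<^sup>2) / (2 * pi) \<le> C\<^sup>2"
proof -
  have "integral {-pi..pi} (\<lambda>k. (cmod (F k))\<^sup>2) \<le> integral {-pi..pi} (\<lambda>k. C\<^sup>2)"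
    by (intro integral_le integrable_continuous_interval continuous_intros assms(1))
      (auto intro!: power_mono assms(2))
  then show ?thesis by (simp add: field_simps)
qed

lemma fourier_coeff_deriv:
  assumes deriv: "\<And>k. k \<in> {-pi..pi} \<Longrightarrow> (G has_vector_derivative G' k) (at k within {-pi..pi})"
    and "continuous_on {-pi..pi} G'" and "continuous_on {-pi..pi} G" and "G (- pi) = G pi"
  shows "of_int j * fourier_coeff G j = \<i> * fourier_coeff G' j"
proof -
  define f where "f k = cis (of_int j * k) * G k" for k
  have "(f has_vector_derivative
          (cis (of_int j * k) * G' k + \<i> * of_int j * (cis (of_int j * k) * G k)))
          (at k within {-pi..pi})" if "k \<in> {-pi..pi}" for k
    unfolding f_def
    using has_vector_derivative_mult[OF has_vector_derivative_cis_linear[of "of_int j"] deriv[OF that]]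
    by (simp add: algebra_simps)
  then have "((\<lambda>k. cis (of_int j * k) * G' k + \<i> * of_int j * (cis (of_int j * k) * G k))
               has_integral (f pi - f (- pi))) {-pi..pi}"
    by (intro fundamental_theorem_of_calculus) auto
  moreover have "f pi - f (- pi) = 0"
    unfolding f_def using cis_int_mult_pi[of j] assms(4) by simp
  ultimately have "integral {-pi..pi}
      (\<lambda>k. cis (of_int j * k) * G' k + \<i> * of_int j * (cis (of_int j * k) * G k)) = 0"
    by (simp add: integral_unique)
  moreover have "(\<lambda>k. \<i> * of_int j * (cis (of_int j * k) * G k)) integrable_on {-pi..pi}"
    by (intro integrable_continuous_interval continuous_intros assms(3))
  ultimately have "integral {-pi..pi} (\<lambda>k. cis (of_int j * k) * G' k)
                 + \<i> * of_int j * integral {-pi..pi} (\<lambda>k. cis (of_int j * k) * G k) = 0"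
    using integrable_cis_mult[OF assms(2)] by (simp add: integral_add)
  then have "fourier_coeff G' j + \<i> * of_int j * fourier_coeff G j = 0"
    unfolding fourier_coeff_def by (simp add: add_divide_distrib[symmetric])
  then show ?thesis by (simp add: algebra_simps eq_neg_iff_add_eq_0 [symmetric])
qed

lemma common_bound_Icc:
  fixes f g :: "real \<Rightarrow> complex"
  assumes "continuous_on {a..b} f" and "continuous_on {a..b} g"
  obtains M where "\<And>k. k \<in> {a..b} \<Longrightarrow> cmod (f k) \<le> M" and "\<And>k. k \<in> {a..b} \<Longrightarrow> cmod (g k) \<le> M"
proof -
  obtain Mf Mg where "\<And>k. k \<in> {a..b} \<Longrightarrow> cmod (f k) \<le> Mf" and "\<And>k. k \<in> {a..b} \<Longrightarrow> cmod (g k) \<le> Mg"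
    using continuous_on_compact_bound[OF compact_Icc assms(1)]
      continuous_on_compact_bound[OF compact_Icc assms(2)] by metis
  then show ?thesis by (intro that[of "max Mf Mg"]) (auto simp: le_max_iff_disj)
qed

section \<open>Square-summable sequences\<close>

definition square_summable :: "('a \<Rightarrow> complex) \<Rightarrow> bool" where
  "square_summable f \<longleftrightarrow> (\<lambda>j. (cmod (f j))\<^sup>2) summable_on UNIV"

lemma square_summable_fourier_coeff:
  assumes "continuous_on {-pi..pi} H"
  shows "square_summable (fourier_coeff H)"
  unfolding square_summable_def
  using bessel_inequality[OF assms]
  by (intro nonneg_bdd_above_summable_on) (auto simp: bdd_above_def)

lemma infsum_fourier_coeff_square_le:
  assumes "continuous_on {-pi..pi} H" and "\<And>k. k \<in> {-pi..pi} \<Longrightarrow> cmod (H k) \<le> C"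
  shows "(\<Sum>\<^sub>\<infinity>j. (cmod (fourier_coeff H j))\<^sup>2) \<le> C\<^sup>2"
proof -
  have "(\<Sum>\<^sub>\<infinity>j. (cmod (fourier_coeff H j))\<^sup>2) \<le> integral {-pi..pi} (\<lambda>k. (cmod (H k))\<^sup>2) / (2 * pi)"
    using square_summable_fourier_coeff[OF assms(1)] bessel_inequality[OF assms(1)]
    by (intro infsum_le_finite_sums) (auto simp: square_summable_def)
  with integral_norm_square_le[OF assms] show ?thesis by linarith
qed

lemma square_summable_shift:
  "square_summable f \<Longrightarrow> square_summable (\<lambda>j::int. f (j + c))"
proof -
  have "bij (\<lambda>j::int. j + c)"
    by (rule bij_betwI[of _ _ _ "\<lambda>j. j - c"]) auto
  then show "square_summable f \<Longrightarrow> square_summable (\<lambda>j. f (j + c))"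
    unfolding square_summable_def summable_on_def
    using has_sum_reindex_bij_betw[of "\<lambda>j. j + c" UNIV UNIV "\<lambda>j. (cmod (f j))\<^sup>2"] by auto
qed

lemma summable_on_mult_square_summable:
  assumes "square_summable f" and "square_summable g"
  shows "(\<lambda>j. f j * g j) summable_on UNIV"
proof (rule abs_summable_summable, rule summable_on_comparison_test)
  show "(\<lambda>j. (cmod (f j))\<^sup>2 + (cmod (g j))\<^sup>2) summable_on UNIV"
    using assms unfolding square_summable_def by (rule summable_on_add)
  show "norm (f j * g j) \<le> (cmod (f j))\<^sup>2 + (cmod (g j))\<^sup>2" for j
  proof -
    have "2 * (cmod (f j) * cmod (g j)) \<le> (cmod (f j))\<^sup>2 + (cmod (g j))\<^sup>2"
      using sum_squares_bound[of "cmod (f j)" "cmod (g j)"] by (simp add: mult.assoc)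
    moreover have "0 \<le> cmod (f j) * cmod (g j)" by simp
    ultimately show ?thesis unfolding norm_mult by linarith
  qed
qed auto

lemma infsum_mult_shift:
  "(\<Sum>\<^sub>\<infinity>j. f j * g (j + c)) = (\<Sum>\<^sub>\<infinity>j::int. f (j - c) * g j)"
proof -
  have "bij (\<lambda>j::int. j - c)"
    by (rule bij_betwI[of _ _ _ "\<lambda>j. j + c"]) auto
  then show ?thesis
    using infsum_reindex_bij_betw[of "\<lambda>j. j - c" UNIV UNIV "\<lambda>j. f j * g (j + c)"] by simp
qed

lemma has_sum_mult_shift:
  assumes "square_summable g" and "square_summable f"
  shows "((\<lambda>j. g j * f (j + c)) has_sum (\<Sum>\<^sub>\<infinity>j. g j * f (j + c))) UNIV"
    and "((\<lambda>j::int. g (j - c) * f j) has_sum (\<Sum>\<^sub>\<infinity>j. g j * f (j + c))) UNIV"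
proof -
  have "(\<lambda>j. g j * f (j + c)) summable_on UNIV"
    using summable_on_mult_square_summable[OF assms(1) square_summable_shift[OF assms(2)]] .
  then show "((\<lambda>j. g j * f (j + c)) has_sum (\<Sum>\<^sub>\<infinity>j. g j * f (j + c))) UNIV"
    by (rule has_sum_infsum)
  have "(\<lambda>j. g (j - c) * f j) summable_on UNIV"
    using summable_on_mult_square_summable[OF square_summable_shift[OF assms(1), of "- c"] assms(2)]
    by simp
  then show "((\<lambda>j::int. g (j - c) * f j) has_sum (\<Sum>\<^sub>\<infinity>j. g j * f (j + c))) UNIV"
    unfolding infsum_mult_shift by (rule has_sum_infsum)
qed

lemma infsum_single: "(\<Sum>\<^sub>\<infinity>j. if j = j0 then c else 0) = (c :: 'a :: {comm_monoid_add, t2_space})"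
proof -
  have "(\<Sum>\<^sub>\<infinity>j. if j = j0 then c else 0) = (\<Sum>\<^sub>\<infinity>j\<in>{j0}. if j = j0 then c else 0)"
    by (rule infsum_cong_neutral) auto
  then show ?thesis by simp
qed

lemma row_square_summable:
  assumes "(\<lambda>(j, s). (cmod (d1 j s))\<^sup>2 + (cmod (d2 j s))\<^sup>2) summable_on UNIV"
  shows "square_summable (\<lambda>j. d1 j s)" and "square_summable (\<lambda>j. d2 j s)"
    and "(\<lambda>s. \<Sum>\<^sub>\<infinity>j. (cmod (d1 j s))\<^sup>2 + (cmod (d2 j s))\<^sup>2) summable_on UNIV"
proof -
  define f where "f s j = (cmod (d1 j s))\<^sup>2 + (cmod (d2 j s))\<^sup>2" for s j
  have "(\<lambda>(s, j). f s j) summable_on UNIV"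
    using summable_on_reindex[of prod.swap UNIV "\<lambda>(j, s). f s j"] assms
    by (simp add: f_def o_def case_prod_unfold)
  then have sigma: "(\<lambda>(s, j). f s j) summable_on Sigma UNIV (\<lambda>_. UNIV)" by simp
  have "(\<lambda>(s, j). f s j) summable_on (Pair s ` UNIV)"
    by (rule summable_on_subset_banach[OF sigma]) auto
  then have "((\<lambda>(s, j). f s j) \<circ> Pair s) summable_on UNIV"
    by (subst (asm) summable_on_reindex) (auto simp: inj_on_def)
  then have "f s summable_on UNIV" by (simp add: o_def)
  then show "square_summable (\<lambda>j. d1 j s)" and "square_summable (\<lambda>j. d2 j s)"
    unfolding square_summable_def
    by (auto intro: summable_on_comparison_test simp: f_def)
  show "(\<lambda>s. \<Sum>\<^sub>\<infinity>j. (cmod (d1 j s))\<^sup>2 + (cmod (d2 j s))\<^sup>2) summable_on UNIV"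
    using summable_on_Sigma_banach[OF sigma] by (simp add: f_def)
qed

lemma summable_on_norm_diff_square:
  fixes a1 a2 b1 b2 :: "'a \<Rightarrow> complex"
  assumes "(\<lambda>p. (cmod (a1 p))\<^sup>2 + (cmod (a2 p))\<^sup>2) summable_on UNIV"
    and "(\<lambda>p. (cmod (b1 p))\<^sup>2 + (cmod (b2 p))\<^sup>2) summable_on UNIV"
  shows "(\<lambda>p. (cmod (a1 p - b1 p))\<^sup>2 + (cmod (a2 p - b2 p))\<^sup>2) summable_on UNIV"
proof (rule summable_on_comparison_test)
  show "(\<lambda>p. 2 * ((cmod (a1 p))\<^sup>2 + (cmod (a2 p))\<^sup>2) + 2 * ((cmod (b1 p))\<^sup>2 + (cmod (b2 p))\<^sup>2))
      summable_on UNIV"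
    by (intro summable_on_add summable_on_cmult_right assms)
  have sq: "(cmod (a - b))\<^sup>2 \<le> 2 * (cmod a)\<^sup>2 + 2 * (cmod b)\<^sup>2" for a b :: complex
  proof -
    have "(cmod (a - b))\<^sup>2 \<le> (cmod a + cmod b)\<^sup>2"
      by (intro power_mono norm_triangle_ineq4) auto
    also have "\<dots> \<le> 2 * (cmod a)\<^sup>2 + 2 * (cmod b)\<^sup>2"
      using sum_squares_bound[of "cmod a" "cmod b"] by (simp add: power2_sum)
    finally show ?thesis .
  qed
  show "(cmod (a1 p - b1 p))\<^sup>2 + (cmod (a2 p - b2 p))\<^sup>2
      \<le> 2 * ((cmod (a1 p))\<^sup>2 + (cmod (a2 p))\<^sup>2) + 2 * ((cmod (b1 p))\<^sup>2 + (cmod (b2 p))\<^sup>2)" for p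
    using sq[of "a1 p" "b1 p"] sq[of "a2 p" "b2 p"] by simp
qed auto

lemma sum_power_abs_int_le:
  fixes q :: real
  assumes "0 \<le> q" and "q < 1" and "finite S"
  shows "(\<Sum>s\<in>S. q ^ nat \<bar>s\<bar>) \<le> 2 / (1 - q)"
proof -
  have half: "(\<Sum>s\<in>T. q ^ nat \<bar>s\<bar>) \<le> 1 / (1 - q)"
    if "finite T" and "inj_on (\<lambda>s. nat \<bar>s\<bar>) T" for T :: "int set"
  proof -
    have "(\<Sum>s\<in>T. q ^ nat \<bar>s\<bar>) = (\<Sum>n\<in>(\<lambda>s. nat \<bar>s\<bar>) ` T. q ^ n)"
      using that by (simp add: sum.reindex)
    also have "\<dots> \<le> (\<Sum>n. q ^ n)"
      using assms that by (intro sum_le_suminf) auto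
    finally show ?thesis using assms by (simp add: suminf_geometric)
  qed
  have "(\<Sum>s\<in>S. q ^ nat \<bar>s\<bar>)
      = (\<Sum>s\<in>{s\<in>S. 0 \<le> s}. q ^ nat \<bar>s\<bar>) + (\<Sum>s\<in>{s\<in>S. s < 0}. q ^ nat \<bar>s\<bar>)"
    using assms(3) by (subst sum.union_disjoint[symmetric]) (auto intro: sum.cong)
  also have "\<dots> \<le> 1 / (1 - q) + 1 / (1 - q)"
    using assms(3) by (intro add_mono half) (auto simp: inj_on_def)
  finally show ?thesis by simp
qed

lemma mult_le_weighted_squares:
  fixes a b \<rho> :: real
  assumes "0 < \<rho>"
  shows "a * b \<le> \<rho> / 2 * a\<^sup>2 + 1 / (2 * \<rho>) * b\<^sup>2"
proof -
  have "0 \<le> (\<rho> * a - b)\<^sup>2 / (2 * \<rho>)" using assms by simp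
  also have "\<dots> = \<rho> / 2 * a\<^sup>2 + 1 / (2 * \<rho>) * b\<^sup>2 - a * b"
    using assms by (simp add: power2_eq_square field_simps)
  finally show ?thesis by simp
qed

definition pairing :: "(int \<Rightarrow> int \<Rightarrow> complex) \<Rightarrow> (int \<Rightarrow> int \<Rightarrow> complex) \<Rightarrow>
    (int \<Rightarrow> int \<Rightarrow> complex) \<Rightarrow> (int \<Rightarrow> int \<Rightarrow> complex) \<Rightarrow> int \<Rightarrow> complex" where
  "pairing g1 g2 d1 d2 s = (\<Sum>\<^sub>\<infinity>j. g1 j s * d1 j s + g2 j s * d2 j s)"

lemma norm_pairing_le:
  assumes "square_summable (\<lambda>j. g1 j s)" and "square_summable (\<lambda>j. g2 j s)"
    and "square_summable (\<lambda>j. d1 j s)" and "square_summable (\<lambda>j. d2 j s)" and "0 < \<rho>"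
  shows "cmod (pairing g1 g2 d1 d2 s)
       \<le> \<rho> / 2 * (\<Sum>\<^sub>\<infinity>j. (cmod (g1 j s))\<^sup>2 + (cmod (g2 j s))\<^sup>2)
         + 1 / (2 * \<rho>) * (\<Sum>\<^sub>\<infinity>j. (cmod (d1 j s))\<^sup>2 + (cmod (d2 j s))\<^sup>2)"
proof -
  define G D where "G j = (cmod (g1 j s))\<^sup>2 + (cmod (g2 j s))\<^sup>2"
    and "D j = (cmod (d1 j s))\<^sup>2 + (cmod (d2 j s))\<^sup>2" for j
  have G: "G summable_on UNIV" and D: "D summable_on UNIV"
    using assms(1-4) unfolding G_def D_def square_summable_def by (auto intro: summable_on_add)
  have bound: "norm (g1 j s * d1 j s + g2 j s * d2 j s) \<le> \<rho> / 2 * G j + 1 / (2 * \<rho>) * D j" for j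
  proof -
    have "norm (g1 j s * d1 j s + g2 j s * d2 j s)
        \<le> cmod (g1 j s) * cmod (d1 j s) + cmod (g2 j s) * cmod (d2 j s)"
      by (metis norm_mult norm_triangle_ineq)
    also have "\<dots> \<le> \<rho> / 2 * G j + 1 / (2 * \<rho>) * D j"
      using mult_le_weighted_squares[OF assms(5), of "cmod (g1 j s)" "cmod (d1 j s)"]
        mult_le_weighted_squares[OF assms(5), of "cmod (g2 j s)" "cmod (d2 j s)"]
      unfolding G_def D_def by (simp add: algebra_simps)
    finally show ?thesis .
  qed
  have GD: "(\<lambda>j. \<rho> / 2 * G j + 1 / (2 * \<rho>) * D j) summable_on UNIV"
    by (intro summable_on_add summable_on_cmult_right G D)
  have abs: "(\<lambda>j. norm (g1 j s * d1 j s + g2 j s * d2 j s)) summable_on UNIV"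
    by (rule summable_on_comparison_test[OF GD]) (use bound in auto)
  have "cmod (pairing g1 g2 d1 d2 s) \<le> (\<Sum>\<^sub>\<infinity>j. norm (g1 j s * d1 j s + g2 j s * d2 j s))"
    unfolding pairing_def by (rule norm_infsum_bound[OF abs])
  also have "\<dots> \<le> (\<Sum>\<^sub>\<infinity>j. \<rho> / 2 * G j + 1 / (2 * \<rho>) * D j)"
    by (rule infsum_mono[OF abs GD bound])
  also have "\<dots> = (\<Sum>\<^sub>\<infinity>j. \<rho> / 2 * G j) + (\<Sum>\<^sub>\<infinity>j. 1 / (2 * \<rho>) * D j)"
    by (intro infsum_add summable_on_cmult_right G D)
  also have "\<dots> = \<rho> / 2 * infsum G UNIV + 1 / (2 * \<rho>) * infsum D UNIV"
    by (simp only: infsum_cmult_right[OF G] infsum_cmult_right[OF D])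
  finally show ?thesis unfolding G_def D_def .
qed

lemma exists_less_if_summable:
  fixes f :: "'a \<Rightarrow> real"
  assumes "f summable_on UNIV" and "\<And>x. 0 \<le> f x" and "infinite S" and "0 < e"
  shows "\<exists>x\<in>S. f x < e"
proof (rule ccontr)
  assume "\<not> (\<exists>x\<in>S. f x < e)"
  then have ge: "\<And>x. x \<in> S \<Longrightarrow> e \<le> f x" by (simp add: not_less)
  obtain n :: nat where n: "infsum f UNIV / e < real n" using reals_Archimedean2 by blast
  obtain T where T: "T \<subseteq> S" "finite T" "card T = n"
    using infinite_arbitrarily_large[OF assms(3)] by blast
  have "real n * e = (\<Sum>x\<in>T. e)" using T by simp
  also have "\<dots> \<le> sum f T" using T ge by (intro sum_mono) auto
  also have "\<dots> \<le> infsum f UNIV"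
    using T assms(1,2) by (intro finite_sum_le_infsum) auto
  finally show False using n assms(4) by (simp add: field_simps)
qed

lemma eq_0_if_const_and_small:
  fixes \<Phi> :: "'a \<Rightarrow> complex" and D :: "'a \<Rightarrow> real"
  assumes const: "\<And>x. x \<in> S \<Longrightarrow> \<Phi> x = \<Phi> x0" and "infinite S"
    and bound: "\<And>x \<rho>. x \<in> S \<Longrightarrow> 0 < \<rho> \<Longrightarrow> cmod (\<Phi> x) \<le> \<rho> / 2 * C + 1 / (2 * \<rho>) * D x"
    and "0 \<le> C" and "D summable_on UNIV" and "\<And>x. 0 \<le> D x"
  shows "\<Phi> x0 = 0"
proof (rule ccontr)
  assume "\<Phi> x0 \<noteq> 0"
  define \<rho> where "\<rho> = cmod (\<Phi> x0) / (C + 1)"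
  have \<rho>: "0 < \<rho>" using \<open>\<Phi> x0 \<noteq> 0\<close> \<open>0 \<le> C\<close> by (simp add: \<rho>_def)
  obtain x where x: "x \<in> S" "D x < \<rho> * cmod (\<Phi> x0) / 2"
    using exists_less_if_summable[OF assms(5,6,2), of "\<rho> * cmod (\<Phi> x0) / 2"]
      \<rho> \<open>\<Phi> x0 \<noteq> 0\<close> by auto
  have "\<rho> / 2 * C < cmod (\<Phi> x0) / 2"
    unfolding \<rho>_def using \<open>\<Phi> x0 \<noteq> 0\<close> \<open>0 \<le> C\<close> by (simp add: field_simps)
  moreover have "cmod (\<Phi> x0) \<le> \<rho> / 2 * C + 1 / (2 * \<rho>) * D x"
    using bound[OF x(1) \<rho>] const[OF x(1)] by simp
  moreover have "1 / (2 * \<rho>) * D x < cmod (\<Phi> x0) / 4"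
    using x(2) \<rho> by (simp add: field_simps)
  ultimately show False using norm_ge_zero[of "\<Phi> x0"] by linarith
qed

section \<open>The transfer matrix\<close>

text \<open>Cayley-Hamilton: the columns of \<open>M - m\<close> are eigenvectors of \<open>M\<close> for the other
  eigenvalue \<open>l\<close>.\<close>
lemma eigenvector_2x2:
  fixes a b c d l m u v z :: complex
  assumes "a * d - b * c = 1" and "l * m = 1" and "l + m = a + d"
  shows "a * (z * (a * u + b * v - m * u)) + b * (z * (c * u + d * v - m * v))
       = l * (z * (a * u + b * v - m * u))"
    and "c * (z * (a * u + b * v - m * u)) + d * (z * (c * u + d * v - m * v))
       = l * (z * (c * u + d * v - m * v))"
  using assms by algebra+

text \<open>The bound on \<open>\<delta>\<close> forces \<open>kap h \<delta> < 1\<close>, which keeps \<open>1 - zeta\<^sup>2\<close> off the branch cut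
  of \<^const>\<open>csqrt\<close>.\<close>
definition admissible :: "real \<Rightarrow> real \<Rightarrow> bool" where
  "admissible h \<delta> \<longleftrightarrow> 0 < h \<and> \<bar>\<delta>\<bar> < h / (1 + h)"

definition kap :: "real \<Rightarrow> real \<Rightarrow> real" where
  "kap h \<delta> = 1 / sqrt (1 + h\<^sup>2) * (1 / sqrt (1 - \<delta>\<^sup>2))"

text \<open>With \<open>h = m \<epsilon>\<close>, the matrix \<open>(tm11 tm12; tm21 tm22)\<close> is the Fourier symbol, in
  the space variable \<open>k\<close>, of one full time step (an odd half-step followed by an even one)
  on the sublattice \<open>\<epsilon> \<int>\<^sup>2\<close>.\<close>
definition tm11 :: "real \<Rightarrow> real \<Rightarrow> real \<Rightarrow> complex" where
  "tm11 h \<delta> k = of_real (kap h \<delta>) * (cis k + \<i> * of_real (\<delta> * h))"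
definition tm12 :: "real \<Rightarrow> real \<Rightarrow> real \<Rightarrow> complex" where
  "tm12 h \<delta> k = of_real (kap h \<delta>) * (of_real h - \<i> * of_real \<delta> * cis k)"
definition tm21 :: "real \<Rightarrow> real \<Rightarrow> real \<Rightarrow> complex" where
  "tm21 h \<delta> k = of_real (kap h \<delta>) * (- of_real h + \<i> * of_real \<delta> * cis (- k))"
definition tm22 :: "real \<Rightarrow> real \<Rightarrow> real \<Rightarrow> complex" where
  "tm22 h \<delta> k = of_real (kap h \<delta>) * (\<i> * of_real (\<delta> * h) + cis (- k))"

definition zeta :: "real \<Rightarrow> real \<Rightarrow> real \<Rightarrow> complex" where
  "zeta h \<delta> k = of_real (kap h \<delta>) * (of_real (cos k) + \<i> * of_real (\<delta> * h))"
definition omega :: "real \<Rightarrow> real \<Rightarrow> real \<Rightarrow> complex" where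
  "omega h \<delta> k = csqrt (1 - (zeta h \<delta> k)\<^sup>2)"
definition lam :: "real \<Rightarrow> real \<Rightarrow> real \<Rightarrow> complex" where
  "lam h \<delta> k = zeta h \<delta> k - \<i> * omega h \<delta> k"
definition mu :: "real \<Rightarrow> real \<Rightarrow> real \<Rightarrow> complex" where
  "mu h \<delta> k = zeta h \<delta> k + \<i> * omega h \<delta> k"

lemma admissible_square_less_1:
  assumes "admissible h \<delta>"
  shows "\<delta>\<^sup>2 < 1"
proof -
  from assms have "0 < h" and "\<bar>\<delta>\<bar> < h / (1 + h)"
    unfolding admissible_def by auto
  moreover have "h / (1 + h) < 1" using \<open>0 < h\<close> by simp
  ultimately have "\<bar>\<delta>\<bar> < 1" by linarith
  then show ?thesis by (simp add: abs_square_less_1)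
qed

lemma kap_pos: "admissible h \<delta> \<Longrightarrow> 0 < kap h \<delta>"
  using admissible_square_less_1[of h \<delta>] add_pos_nonneg[OF zero_less_one zero_le_power2[of h]]
  unfolding kap_def by auto

lemma kap_square: "admissible h \<delta> \<Longrightarrow> (kap h \<delta>)\<^sup>2 * ((1 + h\<^sup>2) * (1 - \<delta>\<^sup>2)) = 1"
  using admissible_square_less_1[of h \<delta>] add_pos_nonneg[OF zero_less_one zero_le_power2[of h]]
  unfolding kap_def by (simp add: power_mult_distrib power_divide)

lemma kap_square_less_1:
  assumes "admissible h \<delta>"
  shows "(kap h \<delta>)\<^sup>2 < 1"
proof -
  from assms have h: "0 < h" and d: "\<bar>\<delta>\<bar> < h / (1 + h)"
    unfolding admissible_def by auto
  have "\<bar>\<delta>\<bar>\<^sup>2 < (h / (1 + h))\<^sup>2" by (rule power_strict_mono) (use d in auto)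
  then have "\<delta>\<^sup>2 * (1 + h)\<^sup>2 < h\<^sup>2" using h by (simp add: power_divide field_simps)
  moreover have "\<delta>\<^sup>2 * (1 + h\<^sup>2) \<le> \<delta>\<^sup>2 * (1 + h)\<^sup>2"
    using h by (intro mult_left_mono) (auto simp: power2_sum)
  ultimately have "1 < (1 + h\<^sup>2) * (1 - \<delta>\<^sup>2)" by (simp add: algebra_simps)
  then show ?thesis using kap_square[OF assms]
    by (smt (verit) mult_less_cancel_left2 mult.commute zero_le_power2)
qed

lemma Re_zeta: "Re (zeta h \<delta> k) = kap h \<delta> * cos k"
  and Im_zeta: "Im (zeta h \<delta> k) = kap h \<delta> * (\<delta> * h)"
  unfolding zeta_def by simp_all

lemma Re_one_minus_zeta_square_pos:
  assumes "admissible h \<delta>"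
  shows "0 < Re (1 - (zeta h \<delta> k)\<^sup>2)"
proof -
  have "Re (1 - (zeta h \<delta> k)\<^sup>2) = 1 - (kap h \<delta>)\<^sup>2 * (cos k)\<^sup>2 + (kap h \<delta> * (\<delta> * h))\<^sup>2"
    by (simp add: power2_eq_square Re_zeta Im_zeta algebra_simps)
  moreover have "(kap h \<delta>)\<^sup>2 * (cos k)\<^sup>2 \<le> (kap h \<delta>)\<^sup>2"
    using abs_cos_le_one[of k] by (intro mult_left_le) (auto simp: abs_square_le_1)
  ultimately show ?thesis using kap_square_less_1[OF assms] by (smt (verit) zero_le_power2)
qed

lemma omega_square: "(omega h \<delta> k)\<^sup>2 = 1 - (zeta h \<delta> k)\<^sup>2"
  unfolding omega_def by simp

lemma Re_omega_pos:
  assumes "admissible h \<delta>"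
  shows "0 < Re (omega h \<delta> k)"
proof (rule ccontr)
  assume "\<not> 0 < Re (omega h \<delta> k)"
  then have "Re (omega h \<delta> k) = 0"
    using csqrt_principal[of "1 - (zeta h \<delta> k)\<^sup>2"] unfolding omega_def by auto
  then have "Re ((omega h \<delta> k)\<^sup>2) \<le> 0" by (simp add: power2_eq_square)
  then show False
    using Re_one_minus_zeta_square_pos[OF assms, of k] omega_square[of h \<delta> k] by simp
qed

lemma omega_nonzero: "admissible h \<delta> \<Longrightarrow> omega h \<delta> k \<noteq> 0"
  using Re_omega_pos[of h \<delta> k] by auto

lemma lam_mult_mu: "lam h \<delta> k * mu h \<delta> k = 1"
  unfolding lam_def mu_def using omega_square[of h \<delta> k]
  by (simp add: algebra_simps power2_eq_square)

lemma lam_plus_mu: "lam h \<delta> k + mu h \<delta> k = 2 * zeta h \<delta> k"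
  unfolding lam_def mu_def by simp

lemma lam_minus_mu: "lam h \<delta> k - mu h \<delta> k = - 2 * \<i> * omega h \<delta> k"
  unfolding lam_def mu_def by simp

lemma lam_ne_mu: "admissible h \<delta> \<Longrightarrow> lam h \<delta> k \<noteq> mu h \<delta> k"
  using omega_nonzero[of h \<delta> k] lam_minus_mu[of h \<delta> k] by auto

lemma mu_mult_lam_power_Suc: "mu h \<delta> k * (lam h \<delta> k ^ Suc n * c) = lam h \<delta> k ^ n * c"
proof -
  have "mu h \<delta> k * (lam h \<delta> k ^ Suc n * c) = (lam h \<delta> k * mu h \<delta> k) * (lam h \<delta> k ^ n * c)"
    by (simp add: mult_ac)
  then show ?thesis by (simp add: lam_mult_mu)
qed

text \<open>For \<open>\<delta> > 0\<close> we have \<open>Im zeta > 0\<close> and \<open>Re omega > 0\<close>, which makes \<open>lam\<close> the eigenvalue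
  of smaller modulus; since \<open>lam * mu = 1\<close> it lies inside the unit circle.\<close>
lemma norm_lam_less_1:
  assumes "admissible h \<delta>" and "0 < \<delta>"
  shows "cmod (lam h \<delta> k) < 1"
proof -
  define x e p q where "x = Re (zeta h \<delta> k)" and "e = Im (zeta h \<delta> k)"
    and "p = Re (omega h \<delta> k)" and "q = Im (omega h \<delta> k)"
  have p: "0 < p" unfolding p_def using Re_omega_pos[OF assms(1)] .
  have e: "0 < e"
    unfolding e_def Im_zeta using kap_pos[OF assms(1)] assms unfolding admissible_def by auto
  have "Im ((omega h \<delta> k)\<^sup>2) = Im (1 - (zeta h \<delta> k)\<^sup>2)" by (simp add: omega_square)
  then have "p * q = - (e * x)"
    unfolding p_def q_def x_def e_def by (simp add: power2_eq_square algebra_simps)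
  have "x * q * p = x * (p * q)" by (simp only: mult_ac)
  also have "\<dots> = - x * x * e" unfolding \<open>p * q = - (e * x)\<close> by (simp add: algebra_simps)
  also have "\<dots> \<le> 0" using e by simp
  also have "0 < e * p * p" using e p by simp
  finally have "x * q < e * p" using p by (simp add: mult.assoc[symmetric])
  then have "(cmod (lam h \<delta> k))\<^sup>2 < (cmod (mu h \<delta> k))\<^sup>2"
    unfolding lam_def mu_def cmod_power2 x_def e_def p_def q_def
    by (simp add: power2_eq_square algebra_simps)
  moreover have "(cmod (lam h \<delta> k))\<^sup>2 * (cmod (mu h \<delta> k))\<^sup>2 = 1"
    using lam_mult_mu[of h \<delta> k] by (metis norm_mult norm_one power_mult_distrib one_power2)
  ultimately show ?thesis
    by (smt (verit, best) mult_le_cancel_right1 one_le_power zero_le_power2)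
qed

lemma det_tm:
  assumes "admissible h \<delta>"
  shows "tm11 h \<delta> k * tm22 h \<delta> k - tm12 h \<delta> k * tm21 h \<delta> k = 1"
proof -
  define e f K where "e = cis k" and "f = cis (- k)" and "K = complex_of_real (kap h \<delta>)"
  have "e * f = 1" unfolding e_def f_def by (simp add: cis_mult)
  have "tm11 h \<delta> k * tm22 h \<delta> k - tm12 h \<delta> k * tm21 h \<delta> k
      = K\<^sup>2 * ((e + \<i> * (of_real \<delta> * of_real h)) * (\<i> * (of_real \<delta> * of_real h) + f)
         - (of_real h - \<i> * of_real \<delta> * e) * (- of_real h + \<i> * of_real \<delta> * f))"
    unfolding tm11_def tm12_def tm21_def tm22_def K_def e_def f_def
    by (simp add: power2_eq_square algebra_simps)
  also have "\<dots> = K\<^sup>2 * ((1 + (of_real h)\<^sup>2) * (1 - (of_real \<delta>)\<^sup>2))"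
    using \<open>e * f = 1\<close> by (simp add: algebra_simps power2_eq_square)
  also have "\<dots> = of_real ((kap h \<delta>)\<^sup>2 * ((1 + h\<^sup>2) * (1 - \<delta>\<^sup>2)))"
    unfolding K_def by simp
  finally show ?thesis unfolding kap_square[OF assms] by simp
qed

lemma trace_tm: "tm11 h \<delta> k + tm22 h \<delta> k = lam h \<delta> k + mu h \<delta> k"
proof -
  have "tm11 h \<delta> k + tm22 h \<delta> k
      = of_real (kap h \<delta>) * (cis k + cis (- k)) + of_real (kap h \<delta>) * 2 * \<i> * of_real (\<delta> * h)"
    unfolding tm11_def tm22_def by (simp add: algebra_simps)
  also have "cis k + cis (- k) = 2 * of_real (cos k)" by (simp add: complex_eq_iff)
  finally show ?thesis unfolding lam_plus_mu zeta_def by (simp add: algebra_simps)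
qed

text \<open>Eigenvectors \<open>(X1, X2)\<close> for \<open>lam\<close> and \<open>(X1, Y2)\<close> for \<open>mu\<close> (columns of \<open>N - mu\<close> and \<open>N - lam\<close>),
  normalised so that their difference is the source term \<open>(0, 2)\<close>.\<close>
definition X1 :: "real \<Rightarrow> real \<Rightarrow> real \<Rightarrow> complex" where
  "X1 h \<delta> k = \<i> / omega h \<delta> k * tm12 h \<delta> k"
definition X2 :: "real \<Rightarrow> real \<Rightarrow> real \<Rightarrow> complex" where
  "X2 h \<delta> k = \<i> / omega h \<delta> k * (tm22 h \<delta> k - mu h \<delta> k)"
definition Y2 :: "real \<Rightarrow> real \<Rightarrow> real \<Rightarrow> complex" where
  "Y2 h \<delta> k = \<i> / omega h \<delta> k * (tm22 h \<delta> k - lam h \<delta> k)"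

lemma X2_eq_Y2_plus_2:
  assumes "admissible h \<delta>"
  shows "X2 h \<delta> k = Y2 h \<delta> k + 2"
proof -
  have "X2 h \<delta> k = Y2 h \<delta> k + \<i> / omega h \<delta> k * (lam h \<delta> k - mu h \<delta> k)"
    unfolding X2_def Y2_def by (simp add: algebra_simps)
  also have "\<i> / omega h \<delta> k * (lam h \<delta> k - mu h \<delta> k) = 2"
    unfolding lam_minus_mu using omega_nonzero[OF assms, of k] by (simp add: field_simps)
  finally show ?thesis .
qed

lemma tm_mult_X:
  assumes "admissible h \<delta>"
  shows "tm11 h \<delta> k * (c * X1 h \<delta> k) + tm12 h \<delta> k * (c * X2 h \<delta> k) = lam h \<delta> k * (c * X1 h \<delta> k)"
    and "tm21 h \<delta> k * (c * X1 h \<delta> k) + tm22 h \<delta> k * (c * X2 h \<delta> k) = lam h \<delta> k * (c * X2 h \<delta> k)"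
  using eigenvector_2x2[OF det_tm[OF assms, of k] lam_mult_mu trace_tm[symmetric],
      where u = 0 and v = 1 and z = "c * (\<i> / omega h \<delta> k)"]
  unfolding X1_def X2_def by (simp_all add: mult_ac)

lemma tm_mult_Y:
  assumes "admissible h \<delta>"
  shows "tm11 h \<delta> k * (c * X1 h \<delta> k) + tm12 h \<delta> k * (c * Y2 h \<delta> k) = mu h \<delta> k * (c * X1 h \<delta> k)"
    and "tm21 h \<delta> k * (c * X1 h \<delta> k) + tm22 h \<delta> k * (c * Y2 h \<delta> k) = mu h \<delta> k * (c * Y2 h \<delta> k)"
  using eigenvector_2x2[OF det_tm[OF assms, of k], where l = "mu h \<delta> k" and m = "lam h \<delta> k"
      and u = 0 and v = 1 and z = "c * (\<i> / omega h \<delta> k)"]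
    lam_mult_mu[of h \<delta> k] trace_tm[of h \<delta> k]
  unfolding X1_def Y2_def by (simp_all add: mult_ac add.commute)

definition admissible_set :: "real \<Rightarrow> (real \<times> real) set" where
  "admissible_set h = {(\<delta>, k). admissible h \<delta>}"

lemma continuous_on_kap: "continuous_on (admissible_set h) (\<lambda>p. kap h (fst p))"
  unfolding kap_def admissible_set_def
  using add_pos_nonneg[OF zero_less_one zero_le_power2[of h]]
  by (intro continuous_intros) (auto dest: admissible_square_less_1)

lemma continuous_on_zeta: "continuous_on (admissible_set h) (\<lambda>p. zeta h (fst p) (snd p))"
  unfolding zeta_def by (intro continuous_intros continuous_on_kap)

lemma continuous_on_omega: "continuous_on (admissible_set h) (\<lambda>p. omega h (fst p) (snd p))"
proof -
  have "1 - (zeta h \<delta> k)\<^sup>2 \<notin> \<real>\<^sub>\<le>\<^sub>0" if "admissible h \<delta>" for \<delta> k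
    using Re_one_minus_zeta_square_pos[OF that, of k] by (auto simp: complex_nonpos_Reals_iff)
  then show ?thesis
    unfolding omega_def
    by (intro continuous_on_compose2[OF continuous_on_csqrt] continuous_intros continuous_on_zeta)
      (auto simp: admissible_set_def)
qed

lemma continuous_on_lam: "continuous_on (admissible_set h) (\<lambda>p. lam h (fst p) (snd p))"
  and continuous_on_mu: "continuous_on (admissible_set h) (\<lambda>p. mu h (fst p) (snd p))"
  unfolding lam_def mu_def by (intro continuous_intros continuous_on_zeta continuous_on_omega)+

lemma continuous_on_X1: "continuous_on (admissible_set h) (\<lambda>p. X1 h (fst p) (snd p))"
  and continuous_on_X2: "continuous_on (admissible_set h) (\<lambda>p. X2 h (fst p) (snd p))"
  and continuous_on_Y2: "continuous_on (admissible_set h) (\<lambda>p. Y2 h (fst p) (snd p))"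
  unfolding X1_def X2_def Y2_def tm12_def tm22_def
  by (intro continuous_intros continuous_on_kap continuous_on_omega continuous_on_lam
      continuous_on_mu; auto simp: admissible_set_def omega_nonzero)+

lemma continuous_on_slice:
  assumes "continuous_on (admissible_set h) (\<lambda>p. f (fst p) (snd p))" and "admissible h \<delta>"
  shows "continuous_on S (f \<delta>)"
proof -
  have "continuous_on S (\<lambda>k. f (fst (\<delta>, k)) (snd (\<delta>, k)))"
    by (rule continuous_on_compose2[OF assms(1)])
      (auto intro!: continuous_intros simp: admissible_set_def assms(2))
  then show ?thesis by simp
qed

section \<open>The solution for \<open>\<delta> > 0\<close>\<close>

text \<open>The spatial Fourier transform of the solution at time \<open>s\<close>, whose coefficients \<open>u1\<close>, \<open>u2\<close>
  (below) are its values at the sites \<open>(j \<epsilon>, s \<epsilon>)\<close>; it decays like \<open>lam\<^bsup>|s|\<^esup>\<close> on both sides of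
  the source at \<open>s = 0\<close>.\<close>
definition Fh1 :: "real \<Rightarrow> real \<Rightarrow> int \<Rightarrow> real \<Rightarrow> complex" where
  "Fh1 h \<delta> s k = lam h \<delta> k ^ nat \<bar>s\<bar> * X1 h \<delta> k"
definition Fh2 :: "real \<Rightarrow> real \<Rightarrow> int \<Rightarrow> real \<Rightarrow> complex" where
  "Fh2 h \<delta> s k = lam h \<delta> k ^ nat \<bar>s\<bar> * (if 0 \<le> s then X2 h \<delta> k else Y2 h \<delta> k)"

lemma Fh_step:
  assumes "admissible h \<delta>"
  shows "Fh1 h \<delta> s k = tm11 h \<delta> k * Fh1 h \<delta> (s - 1) k + tm12 h \<delta> k * Fh2 h \<delta> (s - 1) k"
    and "Fh2 h \<delta> s k = tm21 h \<delta> k * Fh1 h \<delta> (s - 1) k + tm22 h \<delta> k * Fh2 h \<delta> (s - 1) k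
                        + (if s = 0 then 2 else 0)"
proof -
  note X = tm_mult_X[OF assms, of k] and Y = tm_mult_Y[OF assms, of k]
  show "Fh1 h \<delta> s k = tm11 h \<delta> k * Fh1 h \<delta> (s - 1) k + tm12 h \<delta> k * Fh2 h \<delta> (s - 1) k"
  proof (cases "1 \<le> s")
    case True
    then have "nat \<bar>s\<bar> = Suc (nat \<bar>s - 1\<bar>)" by simp
    then show ?thesis unfolding Fh1_def Fh2_def using True X(1)[of "lam h \<delta> k ^ nat \<bar>s - 1\<bar>"] by simp
  next
    case False
    then have "nat \<bar>s - 1\<bar> = Suc (nat \<bar>s\<bar>)" by simp
    then show ?thesis unfolding Fh1_def Fh2_def using False Y(1)[of "lam h \<delta> k ^ nat \<bar>s - 1\<bar>"]
      by (simp add: mu_mult_lam_power_Suc del: power_Suc)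
  qed
  show "Fh2 h \<delta> s k = tm21 h \<delta> k * Fh1 h \<delta> (s - 1) k + tm22 h \<delta> k * Fh2 h \<delta> (s - 1) k
                        + (if s = 0 then 2 else 0)"
  proof (cases "1 \<le> s")
    case True
    then have "nat \<bar>s\<bar> = Suc (nat \<bar>s - 1\<bar>)" by simp
    then show ?thesis unfolding Fh1_def Fh2_def using True X(2)[of "lam h \<delta> k ^ nat \<bar>s - 1\<bar>"] by simp
  next
    case False
    then have "nat \<bar>s - 1\<bar> = Suc (nat \<bar>s\<bar>)" by simp
    then show ?thesis
      unfolding Fh1_def Fh2_def using False Y(2)[of "lam h \<delta> k ^ nat \<bar>s - 1\<bar>"]
        X2_eq_Y2_plus_2[OF assms, of k]
      by (simp add: mu_mult_lam_power_Suc del: power_Suc)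
  qed
qed

lemma continuous_on_Fh1: "continuous_on (admissible_set h) (\<lambda>p. Fh1 h (fst p) s (snd p))"
  and continuous_on_Fh2: "continuous_on (admissible_set h) (\<lambda>p. Fh2 h (fst p) s (snd p))"
  unfolding Fh1_def Fh2_def
  by (cases "0 \<le> s"; simp; intro continuous_intros continuous_on_lam continuous_on_X1
      continuous_on_X2 continuous_on_Y2)+

lemmas continuous_on_Fh = continuous_on_slice[OF continuous_on_Fh1] continuous_on_slice[OF continuous_on_Fh2]

text \<open>One time step of the recurrence on \<open>\<epsilon> \<int>\<^sup>2\<close> obtained from conditions (1) and (2) by
  eliminating the odd sites; it acts on the row at the previous time.\<close>
definition fwd_step1 :: "real \<Rightarrow> real \<Rightarrow> (int \<Rightarrow> complex) \<Rightarrow> (int \<Rightarrow> complex) \<Rightarrow> int \<Rightarrow> complex" where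
  "fwd_step1 h \<delta> f1 f2 j = of_real (kap h \<delta>) *
     (f1 (j + 1) + \<i> * of_real (\<delta> * h) * f1 j + of_real h * f2 j - \<i> * of_real \<delta> * f2 (j + 1))"
definition fwd_step2 :: "real \<Rightarrow> real \<Rightarrow> (int \<Rightarrow> complex) \<Rightarrow> (int \<Rightarrow> complex) \<Rightarrow> int \<Rightarrow> complex" where
  "fwd_step2 h \<delta> f1 f2 j = of_real (kap h \<delta>) *
     (- of_real h * f1 j + \<i> * of_real \<delta> * f1 (j - 1) + \<i> * of_real (\<delta> * h) * f2 j + f2 (j - 1))"

lemma fourier_coeff_tm:
  assumes "continuous_on {-pi..pi} F1" and "continuous_on {-pi..pi} F2"
  shows "fourier_coeff (\<lambda>k. tm11 h \<delta> k * F1 k + tm12 h \<delta> k * F2 k) j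
       = fwd_step1 h \<delta> (fourier_coeff F1) (fourier_coeff F2) j"
    and "fourier_coeff (\<lambda>k. tm21 h \<delta> k * F1 k + tm22 h \<delta> k * F2 k) j
       = fwd_step2 h \<delta> (fourier_coeff F1) (fourier_coeff F2) j"
proof -
  define K where "K = complex_of_real (kap h \<delta>)"
  have "tm11 h \<delta> k = K * cis k + K * \<i> * of_real (\<delta> * h) + 0 * cis (- k)"
    "tm12 h \<delta> k = (- K * \<i> * of_real \<delta>) * cis k + K * of_real h + 0 * cis (- k)"
    "tm21 h \<delta> k = 0 * cis k + (- K * of_real h) + (K * \<i> * of_real \<delta>) * cis (- k)"
    "tm22 h \<delta> k = 0 * cis k + K * \<i> * of_real (\<delta> * h) + K * cis (- k)" for k
    unfolding tm11_def tm12_def tm21_def tm22_def K_def by (simp_all add: algebra_simps)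
  moreover have "continuous_on {-pi..pi} (\<lambda>k. (a * cis k + b + c * cis (- k)) * F k)"
    if "continuous_on {-pi..pi} F" for a b c F
    by (intro continuous_intros that)
  ultimately show "fourier_coeff (\<lambda>k. tm11 h \<delta> k * F1 k + tm12 h \<delta> k * F2 k) j
       = fwd_step1 h \<delta> (fourier_coeff F1) (fourier_coeff F2) j"
    and "fourier_coeff (\<lambda>k. tm21 h \<delta> k * F1 k + tm22 h \<delta> k * F2 k) j
       = fwd_step2 h \<delta> (fourier_coeff F1) (fourier_coeff F2) j"
    using assms
    by (simp_all only: fourier_coeff_add fourier_coeff_stencil)
      (simp_all add: fwd_step1_def fwd_step2_def K_def algebra_simps)
qed

definition u1 :: "real \<Rightarrow> real \<Rightarrow> int \<Rightarrow> int \<Rightarrow> complex" where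
  "u1 h \<delta> j s = fourier_coeff (Fh1 h \<delta> s) j"
definition u2 :: "real \<Rightarrow> real \<Rightarrow> int \<Rightarrow> int \<Rightarrow> complex" where
  "u2 h \<delta> j s = fourier_coeff (Fh2 h \<delta> s) j"

lemma u_step:
  assumes "admissible h \<delta>"
  shows "u1 h \<delta> j s = fwd_step1 h \<delta> (\<lambda>j. u1 h \<delta> j (s - 1)) (\<lambda>j. u2 h \<delta> j (s - 1)) j"
    and "u2 h \<delta> j s = fwd_step2 h \<delta> (\<lambda>j. u1 h \<delta> j (s - 1)) (\<lambda>j. u2 h \<delta> j (s - 1)) j
                      + (if j = 0 \<and> s = 0 then 2 else 0)"
proof -
  note cont = continuous_on_Fh[OF assms, of "{-pi..pi}" "s - 1"]
  have cont_tm: "continuous_on {-pi..pi}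
      (\<lambda>k. tm21 h \<delta> k * Fh1 h \<delta> (s - 1) k + tm22 h \<delta> k * Fh2 h \<delta> (s - 1) k)"
    unfolding tm21_def tm22_def by (intro continuous_intros cont)
  show "u1 h \<delta> j s = fwd_step1 h \<delta> (\<lambda>j. u1 h \<delta> j (s - 1)) (\<lambda>j. u2 h \<delta> j (s - 1)) j"
    unfolding u1_def u2_def Fh_step(1)[OF assms, of s] fourier_coeff_tm(1)[OF cont] ..
  show "u2 h \<delta> j s = fwd_step2 h \<delta> (\<lambda>j. u1 h \<delta> j (s - 1)) (\<lambda>j. u2 h \<delta> j (s - 1)) j
                      + (if j = 0 \<and> s = 0 then 2 else 0)"
    unfolding u1_def u2_def Fh_step(2)[OF assms, of s]
    by (simp only: fourier_coeff_add[OF cont_tm continuous_on_const] fourier_coeff_tm(2)[OF cont]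
        fourier_coeff_const) simp
qed

lemma Fh_geometric_decay:
  assumes "admissible h \<delta>" and "0 < \<delta>"
  obtains r B where "0 \<le> r" and "r < 1"
    and "\<And>k s. k \<in> {-pi..pi} \<Longrightarrow> cmod (Fh1 h \<delta> s k) \<le> B * r ^ nat \<bar>s\<bar>"
    and "\<And>k s. k \<in> {-pi..pi} \<Longrightarrow> cmod (Fh2 h \<delta> s k) \<le> B * r ^ nat \<bar>s\<bar>"
proof -
  note cont = continuous_on_slice[OF _ assms(1)]
  have "continuous_on {-pi..pi} (\<lambda>k. cmod (lam h \<delta> k))"
    by (intro continuous_intros cont[OF continuous_on_lam])
  then obtain k0 where k0: "\<And>k. k \<in> {-pi..pi} \<Longrightarrow> cmod (lam h \<delta> k) \<le> cmod (lam h \<delta> k0)"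
    using continuous_attains_sup[OF compact_Icc _ \<open>continuous_on _ _\<close>] by force
  have "continuous_on {-pi..pi} (\<lambda>k. cmod (X1 h \<delta> k) + cmod (X2 h \<delta> k) + cmod (Y2 h \<delta> k))"
    by (intro continuous_intros cont[OF continuous_on_X1] cont[OF continuous_on_X2]
        cont[OF continuous_on_Y2])
  then obtain B where B: "\<And>k. k \<in> {-pi..pi} \<Longrightarrow>
      norm (cmod (X1 h \<delta> k) + cmod (X2 h \<delta> k) + cmod (Y2 h \<delta> k)) \<le> B"
    using continuous_on_compact_bound[OF compact_Icc] by blast
  define r where "r = cmod (lam h \<delta> k0)"
  have r: "0 \<le> r" "r < 1" unfolding r_def using norm_lam_less_1[OF assms] by auto
  have bound: "cmod (lam h \<delta> k ^ n * v) \<le> B * r ^ n"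
    if "k \<in> {-pi..pi}" and "cmod v \<le> B" for k v n
  proof -
    have "cmod (lam h \<delta> k) ^ n \<le> r ^ n"
      unfolding r_def using k0[OF that(1)] by (intro power_mono) auto
    with that(2) r show ?thesis
      unfolding norm_mult norm_power by (subst mult.commute) (intro mult_mono; simp)
  qed
  have "cmod (X1 h \<delta> k) \<le> B" "cmod (X2 h \<delta> k) \<le> B" "cmod (Y2 h \<delta> k) \<le> B"
    if "k \<in> {-pi..pi}" for k
    using B[OF that] by (smt (verit) norm_ge_zero real_norm_def)+
  then show ?thesis
    using r by (intro that[of r B]) (auto simp: Fh1_def Fh2_def intro!: bound)
qed

lemma u_layer_square_sum_le:
  assumes "admissible h \<delta>" and "0 < \<delta>"
  obtains q C where "0 \<le> q" and "q < 1" and "0 \<le> C"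
    and "\<And>J s. finite J \<Longrightarrow>
           (\<Sum>j\<in>J. (cmod (u1 h \<delta> j s))\<^sup>2 + (cmod (u2 h \<delta> j s))\<^sup>2) \<le> C * q ^ nat \<bar>s\<bar>"
proof -
  obtain r B where r: "0 \<le> r" "r < 1"
    and B: "\<And>k s. k \<in> {-pi..pi} \<Longrightarrow> cmod (Fh1 h \<delta> s k) \<le> B * r ^ nat \<bar>s\<bar>"
           "\<And>k s. k \<in> {-pi..pi} \<Longrightarrow> cmod (Fh2 h \<delta> s k) \<le> B * r ^ nat \<bar>s\<bar>"
    using Fh_geometric_decay[OF assms] by blast
  note cont = continuous_on_Fh[OF assms(1), of "{-pi..pi}"]
  have "(\<Sum>j\<in>J. (cmod (u1 h \<delta> j s))\<^sup>2 + (cmod (u2 h \<delta> j s))\<^sup>2) \<le> (2 * B\<^sup>2) * (r\<^sup>2) ^ nat \<bar>s\<bar>"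
    if "finite J" for J s
  proof -
    have "(\<Sum>j\<in>J. (cmod (u1 h \<delta> j s))\<^sup>2) \<le> (B * r ^ nat \<bar>s\<bar>)\<^sup>2"
      "(\<Sum>j\<in>J. (cmod (u2 h \<delta> j s))\<^sup>2) \<le> (B * r ^ nat \<bar>s\<bar>)\<^sup>2"
      unfolding u1_def u2_def
      using order_trans[OF bessel_inequality[OF cont(1) that] integral_norm_square_le[OF cont(1) B(1)]]
        order_trans[OF bessel_inequality[OF cont(2) that] integral_norm_square_le[OF cont(2) B(2)]]
      by auto
    then show ?thesis
      by (simp add: sum.distrib power_mult_distrib power_mult[symmetric] mult.commute[of 2]
          power_even_eq)
  qed
  moreover have "r\<^sup>2 < 1" using r by (simp add: abs_square_less_1)
  ultimately show ?thesis using r by (intro that[of "r\<^sup>2" "2 * B\<^sup>2"]) auto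
qed

lemma summable_on_u_square:
  assumes "admissible h \<delta>" and "0 < \<delta>"
  shows "(\<lambda>(j, s). (cmod (u1 h \<delta> j s))\<^sup>2 + (cmod (u2 h \<delta> j s))\<^sup>2) summable_on UNIV"
proof -
  obtain q C where q: "0 \<le> q" "q < 1" and "0 \<le> C"
    and layer: "\<And>J s. finite J \<Longrightarrow>
           (\<Sum>j\<in>J. (cmod (u1 h \<delta> j s))\<^sup>2 + (cmod (u2 h \<delta> j s))\<^sup>2) \<le> C * q ^ nat \<bar>s\<bar>"
    using u_layer_square_sum_le[OF assms] by blast
  define g where "g = (\<lambda>(j, s). (cmod (u1 h \<delta> j s))\<^sup>2 + (cmod (u2 h \<delta> j s))\<^sup>2)"
  have "sum g P \<le> C * (2 / (1 - q))" if "finite P" for P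
  proof -
    have "sum g P \<le> sum g (fst ` P \<times> snd ` P)"
      using that by (intro sum_mono2) (auto simp: g_def intro: rev_image_eqI)
    also have "\<dots> = (\<Sum>j\<in>fst ` P. \<Sum>s\<in>snd ` P. g (j, s))"
      by (simp add: sum.cartesian_product)
    also have "\<dots> = (\<Sum>s\<in>snd ` P. \<Sum>j\<in>fst ` P. g (j, s))"
      by (rule sum.swap)
    also have "\<dots> \<le> (\<Sum>s\<in>snd ` P. C * q ^ nat \<bar>s\<bar>)"
      using that by (intro sum_mono) (simp add: g_def layer)
    also have "\<dots> \<le> C * (2 / (1 - q))"
      using that q \<open>0 \<le> C\<close> sum_power_abs_int_le[of q "snd ` P"]
      by (simp add: sum_distrib_left[symmetric] mult_left_mono del: times_divide_eq_right)
    finally show ?thesis .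
  qed
  then have "g summable_on UNIV"
    by (intro nonneg_bdd_above_summable_on) (auto simp: g_def bdd_above_def)
  then show ?thesis unfolding g_def .
qed

section \<open>Uniqueness of square-summable solutions\<close>

text \<open>The formal adjoint of \<^const>\<open>fwd_step1\<close>, \<^const>\<open>fwd_step2\<close> with respect to the
  bilinear pairing \<open>\<Sum>j. g j * f j\<close>.\<close>
definition adj_step1 :: "real \<Rightarrow> real \<Rightarrow> (int \<Rightarrow> complex) \<Rightarrow> (int \<Rightarrow> complex) \<Rightarrow> int \<Rightarrow> complex" where
  "adj_step1 h \<delta> g1 g2 j = of_real (kap h \<delta>) *
     (g1 (j - 1) + \<i> * of_real (\<delta> * h) * g1 j - of_real h * g2 j + \<i> * of_real \<delta> * g2 (j + 1))"
definition adj_step2 :: "real \<Rightarrow> real \<Rightarrow> (int \<Rightarrow> complex) \<Rightarrow> (int \<Rightarrow> complex) \<Rightarrow> int \<Rightarrow> complex" where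
  "adj_step2 h \<delta> g1 g2 j = of_real (kap h \<delta>) *
     (of_real h * g1 j - \<i> * of_real \<delta> * g1 (j - 1) + \<i> * of_real (\<delta> * h) * g2 j + g2 (j + 1))"

lemma infsum_fwd_step_adjoint:
  assumes "square_summable g1" and "square_summable g2"
    and "square_summable f1" and "square_summable f2"
  shows "(\<Sum>\<^sub>\<infinity>j. g1 j * fwd_step1 h \<delta> f1 f2 j + g2 j * fwd_step2 h \<delta> f1 f2 j)
       = (\<Sum>\<^sub>\<infinity>j. adj_step1 h \<delta> g1 g2 j * f1 j + adj_step2 h \<delta> g1 g2 j * f2 j)"
proof -
  define K A H E where "K = complex_of_real (kap h \<delta>)" and "A = \<i> * complex_of_real (\<delta> * h)"
    and "H = complex_of_real h" and "E = \<i> * complex_of_real \<delta>"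
  define P where "P g f c = (\<Sum>\<^sub>\<infinity>j. g j * f (j + c))" for g f :: "int \<Rightarrow> complex" and c
  define S where "S = K * P g1 f1 1 + K * A * P g1 f1 0 + K * H * P g1 f2 0 + (- K * E) * P g1 f2 1
     + (- K * H) * P g2 f1 0 + K * E * P g2 f1 (-1) + K * A * P g2 f2 0 + K * P g2 f2 (-1)"
  note fwd = has_sum_mult_shift(1)[OF assms(1) assms(3)] has_sum_mult_shift(1)[OF assms(1) assms(4)]
    has_sum_mult_shift(1)[OF assms(2) assms(3)] has_sum_mult_shift(1)[OF assms(2) assms(4)]
  note adj = has_sum_mult_shift(2)[OF assms(1) assms(3)] has_sum_mult_shift(2)[OF assms(1) assms(4)]
    has_sum_mult_shift(2)[OF assms(2) assms(3)] has_sum_mult_shift(2)[OF assms(2) assms(4)]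
  have "((\<lambda>j. K * (g1 j * f1 (j + 1)) + K * A * (g1 j * f1 (j + 0)) + K * H * (g1 j * f2 (j + 0))
      + (- K * E) * (g1 j * f2 (j + 1)) + (- K * H) * (g2 j * f1 (j + 0)) + K * E * (g2 j * f1 (j + - 1))
      + K * A * (g2 j * f2 (j + 0)) + K * (g2 j * f2 (j + - 1))) has_sum S) UNIV"
    unfolding S_def P_def by (intro has_sum_add has_sum_cmult_right fwd)
  then have "((\<lambda>j. g1 j * fwd_step1 h \<delta> f1 f2 j + g2 j * fwd_step2 h \<delta> f1 f2 j) has_sum S) UNIV"
    by (rule has_sum_cong[THEN iffD1, rotated])
      (simp add: fwd_step1_def fwd_step2_def K_def A_def H_def E_def algebra_simps)
  moreover have "((\<lambda>j. K * (g1 (j - 1) * f1 j) + K * A * (g1 (j - 0) * f1 j) + K * H * (g1 (j - 0) * f2 j)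
      + (- K * E) * (g1 (j - 1) * f2 j) + (- K * H) * (g2 (j - 0) * f1 j) + K * E * (g2 (j - - 1) * f1 j)
      + K * A * (g2 (j - 0) * f2 j) + K * (g2 (j - - 1) * f2 j)) has_sum S) UNIV"
    unfolding S_def P_def by (intro has_sum_add has_sum_cmult_right adj)
  then have "((\<lambda>j. adj_step1 h \<delta> g1 g2 j * f1 j + adj_step2 h \<delta> g1 g2 j * f2 j) has_sum S) UNIV"
    by (rule has_sum_cong[THEN iffD1, rotated])
      (simp add: adj_step1_def adj_step2_def K_def A_def H_def E_def algebra_simps)
  ultimately show ?thesis by (simp add: infsumI)
qed

lemma pairing_step:
  assumes "square_summable (\<lambda>j. g1 j s)" and "square_summable (\<lambda>j. g2 j s)"
    and "square_summable (\<lambda>j. d1 j (s - 1))" and "square_summable (\<lambda>j. d2 j (s - 1))"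
    and "\<And>j. d1 j s = fwd_step1 h \<delta> (\<lambda>j. d1 j (s - 1)) (\<lambda>j. d2 j (s - 1)) j"
    and "\<And>j. d2 j s = fwd_step2 h \<delta> (\<lambda>j. d1 j (s - 1)) (\<lambda>j. d2 j (s - 1)) j"
    and "\<And>j. g1 j (s - 1) = adj_step1 h \<delta> (\<lambda>j. g1 j s) (\<lambda>j. g2 j s) j"
    and "\<And>j. g2 j (s - 1) = adj_step2 h \<delta> (\<lambda>j. g1 j s) (\<lambda>j. g2 j s) j"
  shows "pairing g1 g2 d1 d2 s = pairing g1 g2 d1 d2 (s - 1)"
  unfolding pairing_def assms(5-8) by (rule infsum_fwd_step_adjoint[OF assms(1-4)])

lemma zeta_minus: "zeta h \<delta> (- k) = zeta h \<delta> k"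
  unfolding zeta_def by simp

lemma lam_minus: "lam h \<delta> (- k) = lam h \<delta> k" and mu_minus: "mu h \<delta> (- k) = mu h \<delta> k"
  unfolding lam_def mu_def omega_def zeta_minus by simp_all

definition tmT11 :: "real \<Rightarrow> real \<Rightarrow> real \<Rightarrow> complex" where "tmT11 h \<delta> k = tm11 h \<delta> (- k)"
definition tmT12 :: "real \<Rightarrow> real \<Rightarrow> real \<Rightarrow> complex" where "tmT12 h \<delta> k = tm21 h \<delta> (- k)"
definition tmT21 :: "real \<Rightarrow> real \<Rightarrow> real \<Rightarrow> complex" where "tmT21 h \<delta> k = tm12 h \<delta> (- k)"
definition tmT22 :: "real \<Rightarrow> real \<Rightarrow> real \<Rightarrow> complex" where "tmT22 h \<delta> k = tm22 h \<delta> (- k)"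

lemma det_tmT: "admissible h \<delta> \<Longrightarrow> tmT11 h \<delta> k * tmT22 h \<delta> k - tmT12 h \<delta> k * tmT21 h \<delta> k = 1"
  unfolding tmT11_def tmT12_def tmT21_def tmT22_def using det_tm[of h \<delta> "- k"]
  by (simp add: mult.commute)

lemma trace_tmT: "tmT11 h \<delta> k + tmT22 h \<delta> k = lam h \<delta> k + mu h \<delta> k"
  unfolding tmT11_def tmT22_def trace_tm lam_minus mu_minus ..

lemma continuous_on_tmT:
  "continuous_on S (tmT11 h \<delta>)" "continuous_on S (tmT12 h \<delta>)"
  "continuous_on S (tmT21 h \<delta>)" "continuous_on S (tmT22 h \<delta>)"
  unfolding tmT11_def tmT12_def tmT21_def tmT22_def tm11_def tm12_def tm21_def tm22_def
  by (intro continuous_intros)+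

lemma fourier_coeff_tmT:
  assumes "continuous_on {-pi..pi} F1" and "continuous_on {-pi..pi} F2"
  shows "fourier_coeff (\<lambda>k. tmT11 h \<delta> k * F1 k + tmT12 h \<delta> k * F2 k) j
       = adj_step1 h \<delta> (fourier_coeff F1) (fourier_coeff F2) j"
    and "fourier_coeff (\<lambda>k. tmT21 h \<delta> k * F1 k + tmT22 h \<delta> k * F2 k) j
       = adj_step2 h \<delta> (fourier_coeff F1) (fourier_coeff F2) j"
proof -
  define K where "K = complex_of_real (kap h \<delta>)"
  have "tmT11 h \<delta> k = 0 * cis k + K * (\<i> * of_real (\<delta> * h)) + K * cis (- k)"
    "tmT12 h \<delta> k = (K * (\<i> * of_real \<delta>)) * cis k + (- K * of_real h) + 0 * cis (- k)"
    "tmT21 h \<delta> k = 0 * cis k + K * of_real h + (- K * (\<i> * of_real \<delta>)) * cis (- k)"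
    "tmT22 h \<delta> k = K * cis k + K * (\<i> * of_real (\<delta> * h)) + 0 * cis (- k)" for k
    unfolding tmT11_def tmT12_def tmT21_def tmT22_def tm11_def tm12_def tm21_def tm22_def K_def
    by (simp_all add: algebra_simps)
  moreover have "continuous_on {-pi..pi} (\<lambda>k. (a * cis k + b + c * cis (- k)) * F k)"
    if "continuous_on {-pi..pi} F" for a b c F
    by (intro continuous_intros that)
  ultimately show "fourier_coeff (\<lambda>k. tmT11 h \<delta> k * F1 k + tmT12 h \<delta> k * F2 k) j
       = adj_step1 h \<delta> (fourier_coeff F1) (fourier_coeff F2) j"
    and "fourier_coeff (\<lambda>k. tmT21 h \<delta> k * F1 k + tmT22 h \<delta> k * F2 k) j
       = adj_step2 h \<delta> (fourier_coeff F1) (fourier_coeff F2) j"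
    using assms
    by (simp_all only: fourier_coeff_add fourier_coeff_stencil)
      (simp_all add: adj_step1_def adj_step2_def K_def algebra_simps)
qed

text \<open>The components of \<open>(e1, e2)\<close> along the eigenvectors of the adjoint symbol for
  \<open>lam\<close> and for \<open>mu\<close>.\<close>
definition Pl1 :: "real \<Rightarrow> real \<Rightarrow> complex \<Rightarrow> complex \<Rightarrow> real \<Rightarrow> complex" where
  "Pl1 h \<delta> e1 e2 k = (tmT11 h \<delta> k * e1 + tmT12 h \<delta> k * e2 - mu h \<delta> k * e1) / (lam h \<delta> k - mu h \<delta> k)"
definition Pl2 :: "real \<Rightarrow> real \<Rightarrow> complex \<Rightarrow> complex \<Rightarrow> real \<Rightarrow> complex" where
  "Pl2 h \<delta> e1 e2 k = (tmT21 h \<delta> k * e1 + tmT22 h \<delta> k * e2 - mu h \<delta> k * e2) / (lam h \<delta> k - mu h \<delta> k)"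
definition Pm1 :: "real \<Rightarrow> real \<Rightarrow> complex \<Rightarrow> complex \<Rightarrow> real \<Rightarrow> complex" where
  "Pm1 h \<delta> e1 e2 k = (tmT11 h \<delta> k * e1 + tmT12 h \<delta> k * e2 - lam h \<delta> k * e1) / (mu h \<delta> k - lam h \<delta> k)"
definition Pm2 :: "real \<Rightarrow> real \<Rightarrow> complex \<Rightarrow> complex \<Rightarrow> real \<Rightarrow> complex" where
  "Pm2 h \<delta> e1 e2 k = (tmT21 h \<delta> k * e1 + tmT22 h \<delta> k * e2 - lam h \<delta> k * e2) / (mu h \<delta> k - lam h \<delta> k)"

lemma tmT_mult_Pl:
  assumes "admissible h \<delta>"
  shows "tmT11 h \<delta> k * (c * Pl1 h \<delta> e1 e2 k) + tmT12 h \<delta> k * (c * Pl2 h \<delta> e1 e2 k)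
       = lam h \<delta> k * (c * Pl1 h \<delta> e1 e2 k)"
    and "tmT21 h \<delta> k * (c * Pl1 h \<delta> e1 e2 k) + tmT22 h \<delta> k * (c * Pl2 h \<delta> e1 e2 k)
       = lam h \<delta> k * (c * Pl2 h \<delta> e1 e2 k)"
  using eigenvector_2x2[OF det_tmT[OF assms, of k] lam_mult_mu trace_tmT[symmetric],
      where u = e1 and v = e2 and z = "c / (lam h \<delta> k - mu h \<delta> k)"]
  unfolding Pl1_def Pl2_def by (simp_all add: mult_ac)

lemma tmT_mult_Pm:
  assumes "admissible h \<delta>"
  shows "tmT11 h \<delta> k * (c * Pm1 h \<delta> e1 e2 k) + tmT12 h \<delta> k * (c * Pm2 h \<delta> e1 e2 k)
       = mu h \<delta> k * (c * Pm1 h \<delta> e1 e2 k)"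
    and "tmT21 h \<delta> k * (c * Pm1 h \<delta> e1 e2 k) + tmT22 h \<delta> k * (c * Pm2 h \<delta> e1 e2 k)
       = mu h \<delta> k * (c * Pm2 h \<delta> e1 e2 k)"
  using eigenvector_2x2[OF det_tmT[OF assms, of k], where l = "mu h \<delta> k" and m = "lam h \<delta> k"
      and u = e1 and v = e2 and z = "c / (mu h \<delta> k - lam h \<delta> k)"]
    lam_mult_mu[of h \<delta> k] trace_tmT[of h \<delta> k]
  unfolding Pm1_def Pm2_def by (simp_all add: mult_ac add.commute)

lemma Pl_plus_Pm:
  assumes "admissible h \<delta>"
  shows "Pl1 h \<delta> e1 e2 k + Pm1 h \<delta> e1 e2 k = e1" and "Pl2 h \<delta> e1 e2 k + Pm2 h \<delta> e1 e2 k = e2"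
proof -
  have D: "lam h \<delta> k - mu h \<delta> k \<noteq> 0" using lam_ne_mu[OF assms, of k] by simp
  have comb: "x / (lam h \<delta> k - mu h \<delta> k) + y / (mu h \<delta> k - lam h \<delta> k) = e"
    if "x - y = (lam h \<delta> k - mu h \<delta> k) * e" for x y e
  proof -
    have "y / (mu h \<delta> k - lam h \<delta> k) = - (y / (lam h \<delta> k - mu h \<delta> k))"
      by (metis minus_diff_eq divide_minus_right)
    then have "x / (lam h \<delta> k - mu h \<delta> k) + y / (mu h \<delta> k - lam h \<delta> k)
             = (x - y) / (lam h \<delta> k - mu h \<delta> k)"
      by (simp add: diff_divide_distrib)
    then show ?thesis using that D by simp
  qed
  show "Pl1 h \<delta> e1 e2 k + Pm1 h \<delta> e1 e2 k = e1" and "Pl2 h \<delta> e1 e2 k + Pm2 h \<delta> e1 e2 k = e2"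
    unfolding Pl1_def Pl2_def Pm1_def Pm2_def by (rule comb, simp add: algebra_simps)+
qed

lemma continuous_on_Pl_Pm:
  assumes "admissible h \<delta>"
  shows "continuous_on S (Pl1 h \<delta> e1 e2)" "continuous_on S (Pl2 h \<delta> e1 e2)"
    "continuous_on S (Pm1 h \<delta> e1 e2)" "continuous_on S (Pm2 h \<delta> e1 e2)"
proof -
  have ne: "\<forall>k\<in>S. lam h \<delta> k - mu h \<delta> k \<noteq> 0" "\<forall>k\<in>S. mu h \<delta> k - lam h \<delta> k \<noteq> 0"
    using lam_ne_mu[OF assms] by (simp_all add: eq_commute[of "mu h \<delta> _"])
  show "continuous_on S (Pl1 h \<delta> e1 e2)" "continuous_on S (Pl2 h \<delta> e1 e2)"
    "continuous_on S (Pm1 h \<delta> e1 e2)" "continuous_on S (Pm2 h \<delta> e1 e2)"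
    unfolding Pl1_def[abs_def] Pl2_def[abs_def] Pm1_def[abs_def] Pm2_def[abs_def]
    by (intro continuous_intros continuous_on_tmT continuous_on_slice[OF continuous_on_lam assms]
        continuous_on_slice[OF continuous_on_mu assms] ne)+
qed

text \<open>Solutions of the adjoint recurrence \<open>H (s - 1) = tmT H s\<close>: \<open>Hup\<close> lives on \<open>s \<ge> s0\<close> and
  decays as \<open>s \<rightarrow> \<infinity>\<close>, \<open>Hdown\<close> lives on \<open>s \<le> s0\<close> and decays as \<open>s \<rightarrow> -\<infinity>\<close>; at \<open>s0\<close> they
  add up to \<open>cis (- j0 k) * (e1, e2)\<close>, whose coefficients pick out the site \<open>j0\<close>.\<close>
definition Hup1 :: "real \<Rightarrow> real \<Rightarrow> complex \<Rightarrow> complex \<Rightarrow> int \<Rightarrow> int \<Rightarrow> int \<Rightarrow> real \<Rightarrow> complex" where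
  "Hup1 h \<delta> e1 e2 j0 s0 s k = (lam h \<delta> k ^ nat (s - s0) * cis (- (of_int j0 * k))) * Pm1 h \<delta> e1 e2 k"
definition Hup2 :: "real \<Rightarrow> real \<Rightarrow> complex \<Rightarrow> complex \<Rightarrow> int \<Rightarrow> int \<Rightarrow> int \<Rightarrow> real \<Rightarrow> complex" where
  "Hup2 h \<delta> e1 e2 j0 s0 s k = (lam h \<delta> k ^ nat (s - s0) * cis (- (of_int j0 * k))) * Pm2 h \<delta> e1 e2 k"
definition Hdown1 :: "real \<Rightarrow> real \<Rightarrow> complex \<Rightarrow> complex \<Rightarrow> int \<Rightarrow> int \<Rightarrow> int \<Rightarrow> real \<Rightarrow> complex" where
  "Hdown1 h \<delta> e1 e2 j0 s0 s k = (lam h \<delta> k ^ nat (s0 - s) * cis (- (of_int j0 * k))) * Pl1 h \<delta> e1 e2 k"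
definition Hdown2 :: "real \<Rightarrow> real \<Rightarrow> complex \<Rightarrow> complex \<Rightarrow> int \<Rightarrow> int \<Rightarrow> int \<Rightarrow> real \<Rightarrow> complex" where
  "Hdown2 h \<delta> e1 e2 j0 s0 s k = (lam h \<delta> k ^ nat (s0 - s) * cis (- (of_int j0 * k))) * Pl2 h \<delta> e1 e2 k"

lemma Hup_step:
  assumes "admissible h \<delta>" and "s0 < s"
  shows "Hup1 h \<delta> e1 e2 j0 s0 (s - 1) k
       = tmT11 h \<delta> k * Hup1 h \<delta> e1 e2 j0 s0 s k + tmT12 h \<delta> k * Hup2 h \<delta> e1 e2 j0 s0 s k"
    and "Hup2 h \<delta> e1 e2 j0 s0 (s - 1) k
       = tmT21 h \<delta> k * Hup1 h \<delta> e1 e2 j0 s0 s k + tmT22 h \<delta> k * Hup2 h \<delta> e1 e2 j0 s0 s k"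
proof -
  have "nat (s - s0) = Suc (nat (s - 1 - s0))" using assms(2) by simp
  then show "Hup1 h \<delta> e1 e2 j0 s0 (s - 1) k
       = tmT11 h \<delta> k * Hup1 h \<delta> e1 e2 j0 s0 s k + tmT12 h \<delta> k * Hup2 h \<delta> e1 e2 j0 s0 s k"
    and "Hup2 h \<delta> e1 e2 j0 s0 (s - 1) k
       = tmT21 h \<delta> k * Hup1 h \<delta> e1 e2 j0 s0 s k + tmT22 h \<delta> k * Hup2 h \<delta> e1 e2 j0 s0 s k"
    unfolding Hup1_def Hup2_def tmT_mult_Pm[OF assms(1)]
    by (simp_all only: mult.assoc mu_mult_lam_power_Suc)
qed

lemma Hdown_step:
  assumes "admissible h \<delta>" and "s \<le> s0"
  shows "Hdown1 h \<delta> e1 e2 j0 s0 (s - 1) k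
       = tmT11 h \<delta> k * Hdown1 h \<delta> e1 e2 j0 s0 s k + tmT12 h \<delta> k * Hdown2 h \<delta> e1 e2 j0 s0 s k"
    and "Hdown2 h \<delta> e1 e2 j0 s0 (s - 1) k
       = tmT21 h \<delta> k * Hdown1 h \<delta> e1 e2 j0 s0 s k + tmT22 h \<delta> k * Hdown2 h \<delta> e1 e2 j0 s0 s k"
proof -
  have "nat (s0 - (s - 1)) = Suc (nat (s0 - s))" using assms(2) by simp
  then show "Hdown1 h \<delta> e1 e2 j0 s0 (s - 1) k
       = tmT11 h \<delta> k * Hdown1 h \<delta> e1 e2 j0 s0 s k + tmT12 h \<delta> k * Hdown2 h \<delta> e1 e2 j0 s0 s k"
    and "Hdown2 h \<delta> e1 e2 j0 s0 (s - 1) k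
       = tmT21 h \<delta> k * Hdown1 h \<delta> e1 e2 j0 s0 s k + tmT22 h \<delta> k * Hdown2 h \<delta> e1 e2 j0 s0 s k"
    unfolding Hdown1_def Hdown2_def tmT_mult_Pl[OF assms(1)] by (simp_all add: algebra_simps)
qed

lemma norm_H_le:
  assumes "admissible h \<delta>" and "0 < \<delta>"
  shows "cmod (Hup1 h \<delta> e1 e2 j0 s0 s k) \<le> cmod (Pm1 h \<delta> e1 e2 k)"
    and "cmod (Hup2 h \<delta> e1 e2 j0 s0 s k) \<le> cmod (Pm2 h \<delta> e1 e2 k)"
    and "cmod (Hdown1 h \<delta> e1 e2 j0 s0 s k) \<le> cmod (Pl1 h \<delta> e1 e2 k)"
    and "cmod (Hdown2 h \<delta> e1 e2 j0 s0 s k) \<le> cmod (Pl2 h \<delta> e1 e2 k)"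
  using norm_lam_less_1[OF assms, of k]
  unfolding Hup1_def Hup2_def Hdown1_def Hdown2_def norm_mult norm_power
  by (auto intro!: mult_left_le_one_le power_le_one)

lemma continuous_on_H:
  assumes "admissible h \<delta>"
  shows "continuous_on S (Hup1 h \<delta> e1 e2 j0 s0 s)" "continuous_on S (Hup2 h \<delta> e1 e2 j0 s0 s)"
    "continuous_on S (Hdown1 h \<delta> e1 e2 j0 s0 s)" "continuous_on S (Hdown2 h \<delta> e1 e2 j0 s0 s)"
  unfolding Hup1_def[abs_def] Hup2_def[abs_def] Hdown1_def[abs_def] Hdown2_def[abs_def]
  by (intro continuous_intros continuous_on_Pl_Pm[OF assms]
      continuous_on_slice[OF continuous_on_lam assms])+

lemma pairing_fourier_step:
  assumes step1: "\<And>j s. d1 j s = fwd_step1 h \<delta> (\<lambda>j. d1 j (s - 1)) (\<lambda>j. d2 j (s - 1)) j"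
    and step2: "\<And>j s. d2 j s = fwd_step2 h \<delta> (\<lambda>j. d1 j (s - 1)) (\<lambda>j. d2 j (s - 1)) j"
    and rows: "\<And>s. square_summable (\<lambda>j. d1 j s)" "\<And>s. square_summable (\<lambda>j. d2 j s)"
    and cont: "continuous_on {-pi..pi} (F s)" "continuous_on {-pi..pi} (G s)"
    and adjF: "\<And>k. F (s - 1) k = tmT11 h \<delta> k * F s k + tmT12 h \<delta> k * G s k"
    and adjG: "\<And>k. G (s - 1) k = tmT21 h \<delta> k * F s k + tmT22 h \<delta> k * G s k"
  shows "pairing (\<lambda>j s. fourier_coeff (F s) j) (\<lambda>j s. fourier_coeff (G s) j) d1 d2 s
       = pairing (\<lambda>j s. fourier_coeff (F s) j) (\<lambda>j s. fourier_coeff (G s) j) d1 d2 (s - 1)"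
proof -
  have GS: "square_summable (\<lambda>j. fourier_coeff (F s) j)" "square_summable (\<lambda>j. fourier_coeff (G s) j)"
    using square_summable_fourier_coeff[OF cont(1)] square_summable_fourier_coeff[OF cont(2)]
    by simp_all
  have adj: "fourier_coeff (F (s - 1)) j
      = adj_step1 h \<delta> (\<lambda>j. fourier_coeff (F s) j) (\<lambda>j. fourier_coeff (G s) j) j"
    "fourier_coeff (G (s - 1)) j
      = adj_step2 h \<delta> (\<lambda>j. fourier_coeff (F s) j) (\<lambda>j. fourier_coeff (G s) j) j" for j
    unfolding adjF[abs_def] adjG[abs_def] fourier_coeff_tmT[OF cont] by simp_all
  show ?thesis
    by (rule pairing_step[of "\<lambda>j s. fourier_coeff (F s) j" s "\<lambda>j s. fourier_coeff (G s) j"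
          d1 d2 h \<delta>, OF GS rows step1 step2])
      (simp_all add: adj)
qed

lemma pairing_fourier_eq_0:
  assumes sm: "(\<lambda>(j, s). (cmod (d1 j s))\<^sup>2 + (cmod (d2 j s))\<^sup>2) summable_on UNIV"
    and cont: "\<And>s. continuous_on {-pi..pi} (F s)" "\<And>s. continuous_on {-pi..pi} (G s)"
    and bound: "\<And>s k. k \<in> {-pi..pi} \<Longrightarrow> cmod (F s k) \<le> M"
      "\<And>s k. k \<in> {-pi..pi} \<Longrightarrow> cmod (G s k) \<le> M"
    and const: "\<And>s. s \<in> S \<Longrightarrow>
      pairing (\<lambda>j s. fourier_coeff (F s) j) (\<lambda>j s. fourier_coeff (G s) j) d1 d2 s
      = pairing (\<lambda>j s. fourier_coeff (F s) j) (\<lambda>j s. fourier_coeff (G s) j) d1 d2 s0"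
    and "infinite S"
  shows "pairing (\<lambda>j s. fourier_coeff (F s) j) (\<lambda>j s. fourier_coeff (G s) j) d1 d2 s0 = 0"
proof -
  note rows = row_square_summable[OF sm]
  define G1 G2 where "G1 = (\<lambda>j s. fourier_coeff (F s) j)" and "G2 = (\<lambda>j s. fourier_coeff (G s) j)"
  have G: "square_summable (\<lambda>j. G1 j s)" "square_summable (\<lambda>j. G2 j s)" for s
    unfolding G1_def G2_def
    using square_summable_fourier_coeff[OF cont(1)] square_summable_fourier_coeff[OF cont(2)]
    by simp_all
  have "(\<Sum>\<^sub>\<infinity>j. (cmod (G1 j s))\<^sup>2 + (cmod (G2 j s))\<^sup>2)
      = (\<Sum>\<^sub>\<infinity>j. (cmod (G1 j s))\<^sup>2) + (\<Sum>\<^sub>\<infinity>j. (cmod (G2 j s))\<^sup>2)" for s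
    using G[of s] by (intro infsum_add) (simp_all add: square_summable_def)
  also have "\<dots> s \<le> M\<^sup>2 + M\<^sup>2" for s
    unfolding G1_def G2_def by (intro add_mono infsum_fourier_coeff_square_le cont bound)
  finally have GM: "(\<Sum>\<^sub>\<infinity>j. (cmod (G1 j s))\<^sup>2 + (cmod (G2 j s))\<^sup>2) \<le> M\<^sup>2 + M\<^sup>2" for s .
  have bound_pairing: "cmod (pairing G1 G2 d1 d2 s)
      \<le> \<rho> / 2 * (M\<^sup>2 + M\<^sup>2) + 1 / (2 * \<rho>) * (\<Sum>\<^sub>\<infinity>j. (cmod (d1 j s))\<^sup>2 + (cmod (d2 j s))\<^sup>2)"
    if "0 < \<rho>" for s \<rho>
  proof -
    have "\<rho> / 2 * (\<Sum>\<^sub>\<infinity>j. (cmod (G1 j s))\<^sup>2 + (cmod (G2 j s))\<^sup>2) \<le> \<rho> / 2 * (M\<^sup>2 + M\<^sup>2)"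
      using that by (intro mult_left_mono GM) simp
    then show ?thesis using norm_pairing_le[of G1 s G2 d1 d2 \<rho>, OF G rows(1,2) that] by linarith
  qed
  show ?thesis
    unfolding G1_def[symmetric] G2_def[symmetric]
    by (rule eq_0_if_const_and_small[where \<Phi> = "pairing G1 G2 d1 d2",
          OF const[folded G1_def G2_def] \<open>infinite S\<close> bound_pairing _ rows(3)])
      (auto intro: infsum_nonneg)
qed

lemma fourier_coeff_Hup_plus_Hdown:
  assumes "admissible h \<delta>"
  shows "fourier_coeff (Hup1 h \<delta> e1 e2 j0 s0 s0) j + fourier_coeff (Hdown1 h \<delta> e1 e2 j0 s0 s0) j
       = (if j = j0 then e1 else 0)"
    and "fourier_coeff (Hup2 h \<delta> e1 e2 j0 s0 s0) j + fourier_coeff (Hdown2 h \<delta> e1 e2 j0 s0 s0) j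
       = (if j = j0 then e2 else 0)"
proof -
  note cont = continuous_on_H[OF assms, of "{-pi..pi}" e1 e2 j0 s0 s0]
  have "Hup1 h \<delta> e1 e2 j0 s0 s0 k + Hdown1 h \<delta> e1 e2 j0 s0 s0 k = cis (- (of_int j0 * k)) * e1"
    "Hup2 h \<delta> e1 e2 j0 s0 s0 k + Hdown2 h \<delta> e1 e2 j0 s0 s0 k = cis (- (of_int j0 * k)) * e2" for k
    using Pl_plus_Pm[OF assms, of e1 e2 k]
    by (simp_all add: Hup1_def Hup2_def Hdown1_def Hdown2_def add.commute flip: distrib_left)
  then show "fourier_coeff (Hup1 h \<delta> e1 e2 j0 s0 s0) j + fourier_coeff (Hdown1 h \<delta> e1 e2 j0 s0 s0) j
       = (if j = j0 then e1 else 0)"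
    and "fourier_coeff (Hup2 h \<delta> e1 e2 j0 s0 s0) j + fourier_coeff (Hdown2 h \<delta> e1 e2 j0 s0 s0) j
       = (if j = j0 then e2 else 0)"
    by (simp_all add: fourier_coeff_add[OF cont(1,3), symmetric]
        fourier_coeff_add[OF cont(2,4), symmetric] fourier_coeff_monomial)
qed

context
  fixes h \<delta> :: real and d1 d2 :: "int \<Rightarrow> int \<Rightarrow> complex"
  assumes adm: "admissible h \<delta>" and pos: "0 < \<delta>"
    and step1: "\<And>j s. d1 j s = fwd_step1 h \<delta> (\<lambda>j. d1 j (s - 1)) (\<lambda>j. d2 j (s - 1)) j"
    and step2: "\<And>j s. d2 j s = fwd_step2 h \<delta> (\<lambda>j. d1 j (s - 1)) (\<lambda>j. d2 j (s - 1)) j"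
    and sm: "(\<lambda>(j, s). (cmod (d1 j s))\<^sup>2 + (cmod (d2 j s))\<^sup>2) summable_on UNIV"
begin

lemma pairing_Hup_eq_0:
  "pairing (\<lambda>j s. fourier_coeff (Hup1 h \<delta> e1 e2 j0 s0 s) j)
     (\<lambda>j s. fourier_coeff (Hup2 h \<delta> e1 e2 j0 s0 s) j) d1 d2 s0 = 0"
proof -
  note cont = continuous_on_H(1,2)[OF adm]
  obtain M where "\<And>k. k \<in> {-pi..pi} \<Longrightarrow> cmod (Pm1 h \<delta> e1 e2 k) \<le> M"
    and "\<And>k. k \<in> {-pi..pi} \<Longrightarrow> cmod (Pm2 h \<delta> e1 e2 k) \<le> M"
    using common_bound_Icc[OF continuous_on_Pl_Pm(3,4)[OF adm]] by blast
  then have bound: "cmod (Hup1 h \<delta> e1 e2 j0 s0 s k) \<le> M" "cmod (Hup2 h \<delta> e1 e2 j0 s0 s k) \<le> M"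
    if "k \<in> {-pi..pi}" for s k
    using that by (auto intro: order_trans[OF norm_H_le(1)[OF adm pos]]
        order_trans[OF norm_H_le(2)[OF adm pos]])
  have const: "pairing (\<lambda>j s. fourier_coeff (Hup1 h \<delta> e1 e2 j0 s0 s) j)
      (\<lambda>j s. fourier_coeff (Hup2 h \<delta> e1 e2 j0 s0 s) j) d1 d2 s
    = pairing (\<lambda>j s. fourier_coeff (Hup1 h \<delta> e1 e2 j0 s0 s) j)
      (\<lambda>j s. fourier_coeff (Hup2 h \<delta> e1 e2 j0 s0 s) j) d1 d2 s0" if "s \<in> {s0..}" for s
  proof -
    from that have "s0 \<le> s" by simp
    then show ?thesis
    proof (induction rule: int_ge_induct)
      case (step s)
      then have "s0 < s + 1" by simp
      from pairing_fourier_step[of d1 h \<delta> d2 "Hup1 h \<delta> e1 e2 j0 s0" "s + 1" "Hup2 h \<delta> e1 e2 j0 s0",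
          OF step1 step2 row_square_summable(1,2)[OF sm] cont Hup_step[OF adm this]] step.IH
      show ?case by simp
    qed simp
  qed
  show ?thesis
    by (rule pairing_fourier_eq_0[where F = "Hup1 h \<delta> e1 e2 j0 s0" and G = "Hup2 h \<delta> e1 e2 j0 s0"
          and S = "{s0..}"]) (fact sm cont bound const infinite_Ici)+
qed

lemma pairing_Hdown_eq_0:
  "pairing (\<lambda>j s. fourier_coeff (Hdown1 h \<delta> e1 e2 j0 s0 s) j)
     (\<lambda>j s. fourier_coeff (Hdown2 h \<delta> e1 e2 j0 s0 s) j) d1 d2 s0 = 0"
proof -
  note cont = continuous_on_H(3,4)[OF adm]
  obtain M where "\<And>k. k \<in> {-pi..pi} \<Longrightarrow> cmod (Pl1 h \<delta> e1 e2 k) \<le> M"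
    and "\<And>k. k \<in> {-pi..pi} \<Longrightarrow> cmod (Pl2 h \<delta> e1 e2 k) \<le> M"
    using common_bound_Icc[OF continuous_on_Pl_Pm(1,2)[OF adm]] by blast
  then have bound: "cmod (Hdown1 h \<delta> e1 e2 j0 s0 s k) \<le> M" "cmod (Hdown2 h \<delta> e1 e2 j0 s0 s k) \<le> M"
    if "k \<in> {-pi..pi}" for s k
    using that by (auto intro: order_trans[OF norm_H_le(3)[OF adm pos]]
        order_trans[OF norm_H_le(4)[OF adm pos]])
  have const: "pairing (\<lambda>j s. fourier_coeff (Hdown1 h \<delta> e1 e2 j0 s0 s) j)
      (\<lambda>j s. fourier_coeff (Hdown2 h \<delta> e1 e2 j0 s0 s) j) d1 d2 s
    = pairing (\<lambda>j s. fourier_coeff (Hdown1 h \<delta> e1 e2 j0 s0 s) j)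
      (\<lambda>j s. fourier_coeff (Hdown2 h \<delta> e1 e2 j0 s0 s) j) d1 d2 s0" if "s \<in> {..s0}" for s
  proof -
    from that have "s \<le> s0" by simp
    then show ?thesis
    proof (induction rule: int_le_induct)
      case (step s)
      from pairing_fourier_step[of d1 h \<delta> d2 "Hdown1 h \<delta> e1 e2 j0 s0" s "Hdown2 h \<delta> e1 e2 j0 s0",
          OF step1 step2 row_square_summable(1,2)[OF sm] cont Hdown_step[OF adm step.hyps]] step.IH
      show ?case by simp
    qed simp
  qed
  show ?thesis
    by (rule pairing_fourier_eq_0[where F = "Hdown1 h \<delta> e1 e2 j0 s0" and G = "Hdown2 h \<delta> e1 e2 j0 s0"
          and S = "{..s0}"]) (fact sm cont bound const infinite_Iic)+
qed

lemma homogeneous_solution_eq_0: "d1 j0 s0 = 0 \<and> d2 j0 s0 = 0"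
proof -
  have "e1 * d1 j0 s0 + e2 * d2 j0 s0 = 0" for e1 e2
  proof -
    note cont = continuous_on_H[OF adm, of "{-pi..pi}" e1 e2 j0 s0 s0]
    note rows = row_square_summable(1,2)[OF sm]
    define U1 U2 D1 D2 where "U1 = fourier_coeff (Hup1 h \<delta> e1 e2 j0 s0 s0)"
      and "U2 = fourier_coeff (Hup2 h \<delta> e1 e2 j0 s0 s0)"
      and "D1 = fourier_coeff (Hdown1 h \<delta> e1 e2 j0 s0 s0)"
      and "D2 = fourier_coeff (Hdown2 h \<delta> e1 e2 j0 s0 s0)"
    have "(U1 j * d1 j s0 + U2 j * d2 j s0) + (D1 j * d1 j s0 + D2 j * d2 j s0)
        = (U1 j + D1 j) * d1 j s0 + (U2 j + D2 j) * d2 j s0" for j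
      by (simp add: algebra_simps)
    then have sum: "(\<lambda>j. (U1 j * d1 j s0 + U2 j * d2 j s0) + (D1 j * d1 j s0 + D2 j * d2 j s0))
        = (\<lambda>j. if j = j0 then e1 * d1 j0 s0 + e2 * d2 j0 s0 else 0)"
      using fourier_coeff_Hup_plus_Hdown[OF adm] by (simp add: U1_def U2_def D1_def D2_def fun_eq_iff)
    have summable: "(\<lambda>j. U1 j * d1 j s0 + U2 j * d2 j s0) summable_on UNIV"
      "(\<lambda>j. D1 j * d1 j s0 + D2 j * d2 j s0) summable_on UNIV"
      unfolding U1_def U2_def D1_def D2_def
      by (intro summable_on_add summable_on_mult_square_summable square_summable_fourier_coeff
          cont rows)+
    have "0 = (\<Sum>\<^sub>\<infinity>j. U1 j * d1 j s0 + U2 j * d2 j s0) + (\<Sum>\<^sub>\<infinity>j. D1 j * d1 j s0 + D2 j * d2 j s0)"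
      using pairing_Hup_eq_0[of e1 e2 j0 s0] pairing_Hdown_eq_0[of e1 e2 j0 s0]
      unfolding pairing_def U1_def U2_def D1_def D2_def by simp
    also have "\<dots> = (\<Sum>\<^sub>\<infinity>j. (U1 j * d1 j s0 + U2 j * d2 j s0) + (D1 j * d1 j s0 + D2 j * d2 j s0))"
      by (rule infsum_add[OF summable, symmetric])
    also have "\<dots> = e1 * d1 j0 s0 + e2 * d2 j0 s0"
      unfolding sum by (rule infsum_single)
    finally show ?thesis by simp
  qed
  from this[of 1 0] this[of 0 1] show ?thesis by simp
qed

end

section \<open>The lattice solution and the limit \<open>\<delta> \<rightarrow> 0\<close>\<close>

lemma of_int_plus_half_not_Ints: "of_int j + 1 / 2 \<notin> (\<int> :: real set)"
proof
  assume "of_int j + 1 / 2 \<in> (\<int> :: real set)"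
  then obtain k where "of_int j + 1 / 2 = (of_int k :: real)" by (auto elim: Ints_cases)
  then have "of_int (2 * (k - j)) = (of_int 1 :: real)" by (simp add: algebra_simps)
  then have "2 * (k - j) = 1" by (simp only: of_int_eq_iff)
  then show False by presburger
qed

lemma even_pt_iff:
  assumes "0 < eps"
  shows "even_pt eps x t \<longleftrightarrow> (\<exists>j s :: int. x = of_int j * eps \<and> t = of_int s * eps)"
proof
  assume "even_pt eps x t"
  then obtain a b :: int where "2 * x / eps = of_int a" "2 * t / eps = of_int b" "even a" "even b"
    unfolding even_pt_def by blast
  with assms show "\<exists>j s :: int. x = of_int j * eps \<and> t = of_int s * eps"
    by (auto elim!: evenE simp: field_simps)
next
  assume "\<exists>j s :: int. x = of_int j * eps \<and> t = of_int s * eps"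
  then obtain j s :: int where "x = of_int j * eps" "t = of_int s * eps" by blast
  with assms have "2 * x / eps = of_int (2 * j)" "2 * t / eps = of_int (2 * s)" by auto
  then show "even_pt eps x t" unfolding even_pt_def by fastforce
qed

lemma odd_pt_iff:
  assumes "0 < eps"
  shows "odd_pt eps x t \<longleftrightarrow>
    (\<exists>j s :: int. x = (of_int j + 1 / 2) * eps \<and> t = (of_int s + 1 / 2) * eps)"
proof
  assume "odd_pt eps x t"
  then obtain a b :: int where "2 * x / eps = of_int a" "2 * t / eps = of_int b" "odd a" "odd b"
    unfolding odd_pt_def by blast
  with assms show "\<exists>j s :: int. x = (of_int j + 1 / 2) * eps \<and> t = (of_int s + 1 / 2) * eps"
    by (auto elim!: oddE simp: field_simps)
next
  assume "\<exists>j s :: int. x = (of_int j + 1 / 2) * eps \<and> t = (of_int s + 1 / 2) * eps"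
  then obtain j s :: int where "x = (of_int j + 1 / 2) * eps" "t = (of_int s + 1 / 2) * eps" by blast
  with assms have "2 * x / eps = of_int (2 * j + 1)" "2 * t / eps = of_int (2 * s + 1)"
    by (auto simp: field_simps)
  then show "odd_pt eps x t" unfolding odd_pt_def by fastforce
qed

lemma lattice_pt_iff:
  assumes "0 < eps"
  shows "lattice_pt eps x t \<longleftrightarrow> even_pt eps x t \<or> odd_pt eps x t"
proof
  assume "lattice_pt eps x t"
  then obtain a b c :: int
    where abc: "2 * x / eps = of_int a" "2 * t / eps = of_int b" "(x + t) / eps = of_int c"
    unfolding lattice_pt_def by (auto elim!: Ints_cases)
  have "2 * x / eps + 2 * t / eps = 2 * ((x + t) / eps)"
    by (simp only: times_divide_eq_right[symmetric] distrib_left[symmetric] add_divide_distrib[symmetric])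
  then have "of_int (a + b) = (of_int (2 * c) :: real)" unfolding abc by simp
  then have "a + b = 2 * c" by (simp only: of_int_eq_iff)
  then have "even a \<and> even b \<or> odd a \<and> odd b" by presburger
  then show "even_pt eps x t \<or> odd_pt eps x t"
    unfolding even_pt_def odd_pt_def using abc(1,2) by blast
next
  assume "even_pt eps x t \<or> odd_pt eps x t"
  then consider (even) j s :: int where "x = of_int j * eps" "t = of_int s * eps"
    | (odd) j s :: int where "x = (of_int j + 1 / 2) * eps" "t = (of_int s + 1 / 2) * eps"
    unfolding even_pt_iff[OF assms] odd_pt_iff[OF assms] by blast
  then show "lattice_pt eps x t"
  proof cases
    case (even j s)
    with assms have "2 * x / eps = of_int (2 * j)" "2 * t / eps = of_int (2 * s)"
      "(x + t) / eps = of_int (j + s)" by (auto simp: field_simps)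
    then show ?thesis unfolding lattice_pt_def by (metis Ints_of_int)
  next
    case (odd j s)
    with assms have "2 * x / eps = of_int (2 * j + 1)" "2 * t / eps = of_int (2 * s + 1)"
      "(x + t) / eps = of_int (j + s + 1)" by (auto simp: field_simps)
    then show ?thesis unfolding lattice_pt_def by (metis Ints_of_int)
  qed
qed

text \<open>Values at the odd sites \<open>((j + 1/2) \<epsilon>, (s + 1/2) \<epsilon>)\<close>, read off from condition (2).\<close>
definition v1 :: "real \<Rightarrow> real \<Rightarrow> int \<Rightarrow> int \<Rightarrow> complex" where
  "v1 h \<delta> j s = of_real (1 / sqrt (1 - \<delta>\<^sup>2)) * (u1 h \<delta> (j + 1) s - \<i> * of_real \<delta> * u2 h \<delta> (j + 1) s)"
definition v2 :: "real \<Rightarrow> real \<Rightarrow> int \<Rightarrow> int \<Rightarrow> complex" where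
  "v2 h \<delta> j s = of_real (1 / sqrt (1 - \<delta>\<^sup>2)) * (u2 h \<delta> j s + \<i> * of_real \<delta> * u1 h \<delta> j s)"

definition Asol1 :: "real \<Rightarrow> real \<Rightarrow> real \<Rightarrow> real \<Rightarrow> real \<Rightarrow> complex" where
  "Asol1 m eps \<delta> x t =
    (if x / eps \<in> \<int> \<and> t / eps \<in> \<int> then u1 (m * eps) \<delta> \<lfloor>x / eps\<rfloor> \<lfloor>t / eps\<rfloor>
     else if x / eps - 1 / 2 \<in> \<int> \<and> t / eps - 1 / 2 \<in> \<int> then v1 (m * eps) \<delta> \<lfloor>x / eps\<rfloor> \<lfloor>t / eps\<rfloor>
     else 0)"
definition Asol2 :: "real \<Rightarrow> real \<Rightarrow> real \<Rightarrow> real \<Rightarrow> real \<Rightarrow> complex" where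
  "Asol2 m eps \<delta> x t =
    (if x / eps \<in> \<int> \<and> t / eps \<in> \<int> then u2 (m * eps) \<delta> \<lfloor>x / eps\<rfloor> \<lfloor>t / eps\<rfloor>
     else if x / eps - 1 / 2 \<in> \<int> \<and> t / eps - 1 / 2 \<in> \<int> then v2 (m * eps) \<delta> \<lfloor>x / eps\<rfloor> \<lfloor>t / eps\<rfloor>
     else 0)"

lemma Asol_even:
  assumes "eps \<noteq> 0"
  shows "Asol1 m eps \<delta> (of_int j * eps) (of_int s * eps) = u1 (m * eps) \<delta> j s"
    and "Asol2 m eps \<delta> (of_int j * eps) (of_int s * eps) = u2 (m * eps) \<delta> j s"
  using assms unfolding Asol1_def Asol2_def by simp_all

lemma Asol_odd:
  assumes "eps \<noteq> 0"
  shows "Asol1 m eps \<delta> ((of_int j + 1 / 2) * eps) ((of_int s + 1 / 2) * eps) = v1 (m * eps) \<delta> j s"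
    and "Asol2 m eps \<delta> ((of_int j + 1 / 2) * eps) ((of_int s + 1 / 2) * eps) = v2 (m * eps) \<delta> j s"
  using assms of_int_plus_half_not_Ints[of j] of_int_plus_half_not_Ints[of s]
  unfolding Asol1_def Asol2_def by (simp_all add: floor_eq_iff)

lemma Asol_off_lattice:
  assumes "0 < eps" and "\<not> lattice_pt eps x t"
  shows "Asol1 m eps \<delta> x t = 0" and "Asol2 m eps \<delta> x t = 0"
proof -
  have "\<not> (x / eps \<in> \<int> \<and> t / eps \<in> \<int>)"
  proof
    assume "x / eps \<in> \<int> \<and> t / eps \<in> \<int>"
    then obtain j s where "x / eps = of_int j" "t / eps = of_int s" by (auto elim!: Ints_cases)
    with assms show False by (auto simp: lattice_pt_iff even_pt_iff field_simps)
  qed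
  moreover have "\<not> (x / eps - 1 / 2 \<in> \<int> \<and> t / eps - 1 / 2 \<in> \<int>)"
  proof
    assume "x / eps - 1 / 2 \<in> \<int> \<and> t / eps - 1 / 2 \<in> \<int>"
    then obtain j s where "x / eps - 1 / 2 = of_int j" "t / eps - 1 / 2 = of_int s"
      by (auto elim!: Ints_cases)
    with assms show False by (auto simp: lattice_pt_iff odd_pt_iff field_simps)
  qed
  ultimately show "Asol1 m eps \<delta> x t = 0" and "Asol2 m eps \<delta> x t = 0"
    unfolding Asol1_def Asol2_def by auto
qed

lemma summable_on_eps_lattice_iff:
  fixes eps :: real
  assumes "eps \<noteq> 0"
  shows "f summable_on {(x, t). x / eps \<in> \<int> \<and> t / eps \<in> \<int>}
    \<longleftrightarrow> (\<lambda>(j, s). f (of_int j * eps, of_int s * eps)) summable_on (UNIV :: (int \<times> int) set)"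
proof -
  have "{(x, t). x / eps \<in> \<int> \<and> t / eps \<in> \<int>} = (\<lambda>(j, s). (of_int j * eps, of_int s * eps)) ` UNIV"
  proof (intro equalityI subsetI)
    fix p assume "p \<in> {(x, t). x / eps \<in> \<int> \<and> t / eps \<in> \<int>}"
    then obtain x t j s where "p = (x, t)" "x / eps = of_int j" "t / eps = of_int s"
      by (auto elim!: Ints_cases)
    with assms have "p = (of_int j * eps, of_int s * eps)" by (auto simp: field_simps)
    then show "p \<in> (\<lambda>(j, s). (of_int j * eps, of_int s * eps)) ` UNIV" by auto
  qed (use assms in auto)
  moreover have "inj (\<lambda>(j::int, s::int). (of_int j * eps, of_int s * eps))"
    using assms by (auto simp: inj_on_def)
  ultimately show ?thesis by (simp add: summable_on_reindex o_def case_prod_unfold)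
qed

lemma half_shifts:
  "of_int j * eps + eps / 2 = (of_int j + 1 / 2) * eps"
  "of_int j * eps - eps / 2 = (of_int (j - 1) + 1 / 2) * eps"
  "(of_int j + 1 / 2) * eps + eps / 2 = of_int (j + 1) * eps"
  "(of_int j + 1 / 2) * eps - eps / 2 = of_int j * (eps :: real)"
  by (simp_all add: algebra_simps)

lemma kap_mult: "kap (m * eps) \<delta> = 1 / sqrt (1 + m\<^sup>2 * eps\<^sup>2) * (1 / sqrt (1 - \<delta>\<^sup>2))"
  unfolding kap_def by (simp add: power_mult_distrib)

lemma is_sol_Asol:
  assumes "0 < eps" and "admissible (m * eps) \<delta>" and "0 < \<delta>"
  shows "is_sol m eps \<delta> (Asol1 m eps \<delta>) (Asol2 m eps \<delta>)"
proof -
  have eps: "eps \<noteq> 0" using assms(1) by simp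
  have even: "Asol1 m eps \<delta> x t = of_real (1 / sqrt (1 + m\<^sup>2 * eps\<^sup>2)) *
      (Asol1 m eps \<delta> (x + eps / 2) (t - eps / 2) + of_real (m * eps) * Asol2 m eps \<delta> (x + eps / 2) (t - eps / 2))
    \<and> Asol2 m eps \<delta> x t = of_real (1 / sqrt (1 + m\<^sup>2 * eps\<^sup>2)) *
      (Asol2 m eps \<delta> (x - eps / 2) (t - eps / 2) - of_real (m * eps) * Asol1 m eps \<delta> (x - eps / 2) (t - eps / 2))
      + (if x = 0 \<and> t = 0 then 2 else 0)"
    if ev: "even_pt eps x t" for x t
  proof -
    obtain j s where xt: "x = of_int j * eps" "t = of_int s * eps"
      using ev unfolding even_pt_iff[OF assms(1)] by blast
    have z: "(x = 0 \<and> t = 0) = (j = 0 \<and> s = 0)" using xt eps by simp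
    show ?thesis
      unfolding z unfolding xt half_shifts Asol_even[OF eps] Asol_odd[OF eps]
        u_step(1)[OF assms(2), of j s] u_step(2)[OF assms(2), of j s]
      by (simp add: fwd_step1_def fwd_step2_def v1_def v2_def kap_mult algebra_simps)
  qed
  have odd: "Asol1 m eps \<delta> x t = of_real (1 / sqrt (1 - \<delta>\<^sup>2)) *
      (Asol1 m eps \<delta> (x + eps / 2) (t - eps / 2) - \<i> * of_real \<delta> * Asol2 m eps \<delta> (x + eps / 2) (t - eps / 2))
    \<and> Asol2 m eps \<delta> x t = of_real (1 / sqrt (1 - \<delta>\<^sup>2)) *
      (Asol2 m eps \<delta> (x - eps / 2) (t - eps / 2) + \<i> * of_real \<delta> * Asol1 m eps \<delta> (x - eps / 2) (t - eps / 2))"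
    if od: "odd_pt eps x t" for x t
  proof -
    obtain j s where xt: "x = (of_int j + 1 / 2) * eps" "t = (of_int s + 1 / 2) * eps"
      using od unfolding odd_pt_iff[OF assms(1)] by blast
    show ?thesis unfolding xt half_shifts Asol_even[OF eps] Asol_odd[OF eps] v1_def v2_def by simp
  qed
  have "(\<lambda>(x, t). (cmod (Asol1 m eps \<delta> x t))\<^sup>2 + (cmod (Asol2 m eps \<delta> x t))\<^sup>2) summable_on
      {(x, t). x / eps \<in> \<int> \<and> t / eps \<in> \<int>}"
    unfolding summable_on_eps_lattice_iff[OF eps]
    using summable_on_u_square[OF assms(2,3)] by (simp add: Asol_even[OF eps])
  then show ?thesis
    unfolding is_sol_def using Asol_off_lattice[OF assms(1)] even odd by blast
qed

lemma is_sol_odd: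
  assumes "0 < eps" and "is_sol m eps \<delta> P1 P2"
  shows "P1 ((of_int j + 1 / 2) * eps) ((of_int s + 1 / 2) * eps) = of_real (1 / sqrt (1 - \<delta>\<^sup>2)) *
      (P1 (of_int (j + 1) * eps) (of_int s * eps) - \<i> * of_real \<delta> * P2 (of_int (j + 1) * eps) (of_int s * eps))"
    and "P2 ((of_int j + 1 / 2) * eps) ((of_int s + 1 / 2) * eps) = of_real (1 / sqrt (1 - \<delta>\<^sup>2)) *
      (P2 (of_int j * eps) (of_int s * eps) + \<i> * of_real \<delta> * P1 (of_int j * eps) (of_int s * eps))"
proof -
  have odd: "odd_pt eps ((of_int j + 1 / 2) * eps) ((of_int s + 1 / 2) * eps)"
    unfolding odd_pt_iff[OF assms(1)] by blast
  then have "lattice_pt eps ((of_int j + 1 / 2) * eps) ((of_int s + 1 / 2) * eps)"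
    unfolding lattice_pt_iff[OF assms(1)] ..
  note rule = assms(2)[unfolded is_sol_def, THEN conjunct2, THEN conjunct2, THEN conjunct1,
      rule_format, OF conjI[OF this odd], unfolded half_shifts]
  show "P1 ((of_int j + 1 / 2) * eps) ((of_int s + 1 / 2) * eps) = of_real (1 / sqrt (1 - \<delta>\<^sup>2)) *
      (P1 (of_int (j + 1) * eps) (of_int s * eps) - \<i> * of_real \<delta> * P2 (of_int (j + 1) * eps) (of_int s * eps))"
    and "P2 ((of_int j + 1 / 2) * eps) ((of_int s + 1 / 2) * eps) = of_real (1 / sqrt (1 - \<delta>\<^sup>2)) *
      (P2 (of_int j * eps) (of_int s * eps) + \<i> * of_real \<delta> * P1 (of_int j * eps) (of_int s * eps))"
    using rule by blast+
qed

lemma is_sol_even: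
  assumes "0 < eps" and "is_sol m eps \<delta> P1 P2"
  shows "P1 (of_int j * eps) (of_int s * eps)
       = fwd_step1 (m * eps) \<delta> (\<lambda>j. P1 (of_int j * eps) (of_int (s - 1) * eps))
           (\<lambda>j. P2 (of_int j * eps) (of_int (s - 1) * eps)) j"
    and "P2 (of_int j * eps) (of_int s * eps)
       = fwd_step2 (m * eps) \<delta> (\<lambda>j. P1 (of_int j * eps) (of_int (s - 1) * eps))
           (\<lambda>j. P2 (of_int j * eps) (of_int (s - 1) * eps)) j
         + (if j = 0 \<and> s = 0 then 2 else 0)"
proof -
  have "even_pt eps (of_int j * eps) (of_int s * eps)"
    unfolding even_pt_iff[OF assms(1)] by blast
  moreover from this have "lattice_pt eps (of_int j * eps) (of_int s * eps)"
    unfolding lattice_pt_iff[OF assms(1)] ..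
  ultimately have "P1 (of_int j * eps) (of_int s * eps) = of_real (1 / sqrt (1 + m\<^sup>2 * eps\<^sup>2)) *
      (P1 (of_int j * eps + eps / 2) (of_int s * eps - eps / 2)
       + of_real (m * eps) * P2 (of_int j * eps + eps / 2) (of_int s * eps - eps / 2))
    \<and> P2 (of_int j * eps) (of_int s * eps) = of_real (1 / sqrt (1 + m\<^sup>2 * eps\<^sup>2)) *
      (P2 (of_int j * eps - eps / 2) (of_int s * eps - eps / 2)
       - of_real (m * eps) * P1 (of_int j * eps - eps / 2) (of_int s * eps - eps / 2))
      + (if of_int j * eps = 0 \<and> of_int s * eps = 0 then 2 else 0)"
    using assms(2)[unfolded is_sol_def, THEN conjunct2, THEN conjunct1, rule_format] by blast
  moreover have "(of_int j * eps = 0 \<and> of_int s * eps = 0) = (j = 0 \<and> s = 0)"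
    using assms(1) by simp
  ultimately show "P1 (of_int j * eps) (of_int s * eps)
       = fwd_step1 (m * eps) \<delta> (\<lambda>j. P1 (of_int j * eps) (of_int (s - 1) * eps))
           (\<lambda>j. P2 (of_int j * eps) (of_int (s - 1) * eps)) j"
    and "P2 (of_int j * eps) (of_int s * eps)
       = fwd_step2 (m * eps) \<delta> (\<lambda>j. P1 (of_int j * eps) (of_int (s - 1) * eps))
           (\<lambda>j. P2 (of_int j * eps) (of_int (s - 1) * eps)) j
         + (if j = 0 \<and> s = 0 then 2 else 0)"
    unfolding half_shifts is_sol_odd[OF assms]
    by (simp_all add: fwd_step1_def fwd_step2_def kap_mult algebra_simps del: of_int_diff)
qed

lemma fwd_step_diff:
  "fwd_step1 h \<delta> (\<lambda>j. a j - b j) (\<lambda>j. c j - d j) j = fwd_step1 h \<delta> a c j - fwd_step1 h \<delta> b d j"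
  "fwd_step2 h \<delta> (\<lambda>j. a j - b j) (\<lambda>j. c j - d j) j = fwd_step2 h \<delta> a c j - fwd_step2 h \<delta> b d j"
  unfolding fwd_step1_def fwd_step2_def by (simp_all add: algebra_simps)

lemma is_sol_eq_u:
  assumes "0 < eps" and "admissible (m * eps) \<delta>" and "0 < \<delta>" and sol: "is_sol m eps \<delta> P1 P2"
  shows "P1 (of_int j * eps) (of_int s * eps) = u1 (m * eps) \<delta> j s
    \<and> P2 (of_int j * eps) (of_int s * eps) = u2 (m * eps) \<delta> j s"
proof -
  have eps: "eps \<noteq> 0" using assms(1) by simp
  define d1 d2 where "d1 j s = P1 (of_int j * eps) (of_int s * eps) - u1 (m * eps) \<delta> j s"
    and "d2 j s = P2 (of_int j * eps) (of_int s * eps) - u2 (m * eps) \<delta> j s" for j s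
  have step1: "d1 j s = fwd_step1 (m * eps) \<delta> (\<lambda>j. d1 j (s - 1)) (\<lambda>j. d2 j (s - 1)) j"
    and step2: "d2 j s = fwd_step2 (m * eps) \<delta> (\<lambda>j. d1 j (s - 1)) (\<lambda>j. d2 j (s - 1)) j" for j s
    unfolding d1_def d2_def fwd_step_diff is_sol_even[OF assms(1) sol, of j s] u_step[OF assms(2), of j s]
    by simp_all
  have "(\<lambda>p. (cmod (P1 (of_int (fst p) * eps) (of_int (snd p) * eps)))\<^sup>2
                 + (cmod (P2 (of_int (fst p) * eps) (of_int (snd p) * eps)))\<^sup>2) summable_on UNIV"
    using sol unfolding is_sol_def summable_on_eps_lattice_iff[OF eps] by (simp add: case_prod_unfold)
  moreover have "(\<lambda>p. (cmod (u1 (m * eps) \<delta> (fst p) (snd p)))\<^sup>2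
                 + (cmod (u2 (m * eps) \<delta> (fst p) (snd p)))\<^sup>2) summable_on UNIV"
    using summable_on_u_square[OF assms(2,3)] by (simp add: case_prod_unfold)
  ultimately have "(\<lambda>(j, s). (cmod (d1 j s))\<^sup>2 + (cmod (d2 j s))\<^sup>2) summable_on UNIV"
    using summable_on_norm_diff_square unfolding d1_def d2_def by (simp add: case_prod_unfold)
  from homogeneous_solution_eq_0[OF assms(2,3) step1 step2 this, of j s] show ?thesis
    unfolding d1_def d2_def by simp
qed

lemma is_sol_unique:
  assumes "0 < eps" and "admissible (m * eps) \<delta>" and "0 < \<delta>" and sol: "is_sol m eps \<delta> P1 P2"
  shows "P1 = Asol1 m eps \<delta>" and "P2 = Asol2 m eps \<delta>"
proof -
  have eps: "eps \<noteq> 0" using assms(1) by simp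
  note even = is_sol_eq_u[OF assms, THEN conjunct1] is_sol_eq_u[OF assms, THEN conjunct2]
  have "P1 x t = Asol1 m eps \<delta> x t \<and> P2 x t = Asol2 m eps \<delta> x t" for x t
  proof (cases "lattice_pt eps x t")
    case False
    with sol show ?thesis using Asol_off_lattice[OF assms(1) False] unfolding is_sol_def by simp
  next
    case True
    then consider "even_pt eps x t" | "odd_pt eps x t" unfolding lattice_pt_iff[OF assms(1)] by blast
    then show ?thesis
    proof cases
      case 1
      then obtain j s where "x = of_int j * eps" "t = of_int s * eps"
        unfolding even_pt_iff[OF assms(1)] by blast
      then show ?thesis by (simp add: Asol_even[OF eps] even)
    next
      case 2
      then obtain j s where "x = (of_int j + 1 / 2) * eps" "t = (of_int s + 1 / 2) * eps"
        unfolding odd_pt_iff[OF assms(1)] by blast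
      then show ?thesis
        by (simp add: Asol_odd[OF eps] is_sol_odd[OF assms(1) sol] even v1_def v2_def del: of_int_add)
    qed
  qed
  then show "P1 = Asol1 m eps \<delta>" and "P2 = Asol2 m eps \<delta>" by auto
qed

lemma A_eq_Asol:
  assumes "0 < eps" and "admissible (m * eps) \<delta>" and "0 < \<delta>"
  shows "A1 x t m eps \<delta> = Asol1 m eps \<delta> x t" and "A2 x t m eps \<delta> = Asol2 m eps \<delta> x t"
proof -
  have "A_pair m eps \<delta> = (Asol1 m eps \<delta>, Asol2 m eps \<delta>)"
    unfolding A_pair_def
  proof (rule the_equality)
    show "is_sol m eps \<delta> (fst (Asol1 m eps \<delta>, Asol2 m eps \<delta>)) (snd (Asol1 m eps \<delta>, Asol2 m eps \<delta>))"
      using is_sol_Asol[OF assms] by simp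
    fix p assume "is_sol m eps \<delta> (fst p) (snd p)"
    from is_sol_unique[OF assms this] show "p = (Asol1 m eps \<delta>, Asol2 m eps \<delta>)"
      by (simp add: prod_eq_iff)
  qed
  then show "A1 x t m eps \<delta> = Asol1 m eps \<delta> x t" and "A2 x t m eps \<delta> = Asol2 m eps \<delta> x t"
    unfolding A1_def A2_def by simp_all
qed

lemma admissible_if_small:
  assumes "0 < h" and "0 \<le> \<delta>" and "\<delta> \<le> h / (2 * (1 + h))"
  shows "admissible h \<delta>"
proof -
  have "0 < h + h * h" using assms(1) by (simp add: add_pos_pos)
  then have "h / (2 * (1 + h)) < h / (1 + h)" using assms(1) by (simp add: field_simps)
  then show ?thesis unfolding admissible_def using assms by auto
qed

lemma u_tendsto_delta_0:
  assumes "0 < h"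
  shows "((\<lambda>\<delta>. u1 h \<delta> j s) \<longlongrightarrow> u1 h 0 j s) (at_right 0)"
    and "((\<lambda>\<delta>. u2 h \<delta> j s) \<longlongrightarrow> u2 h 0 j s) (at_right 0)"
proof -
  define b where "b = h / (2 * (1 + h))"
  have b: "0 < b" unfolding b_def using assms by simp
  have sub: "{0..b} \<times> cbox (-pi) pi \<subseteq> admissible_set h"
    unfolding admissible_set_def b_def using admissible_if_small[OF assms] by auto
  have "continuous_on ({0..b} \<times> cbox (-pi) pi) (\<lambda>(\<delta>, k). cis (of_int j * k) * Fh1 h \<delta> s k)"
    "continuous_on ({0..b} \<times> cbox (-pi) pi) (\<lambda>(\<delta>, k). cis (of_int j * k) * Fh2 h \<delta> s k)"
    unfolding case_prod_unfold
    by (intro continuous_intros continuous_on_subset[OF continuous_on_Fh1 sub]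
        continuous_on_subset[OF continuous_on_Fh2 sub])+
  from this[THEN integral_continuous_on_param]
  have "continuous_on {0..b} (\<lambda>\<delta>. u1 h \<delta> j s)" "continuous_on {0..b} (\<lambda>\<delta>. u2 h \<delta> j s)"
    unfolding u1_def u2_def fourier_coeff_def
    by (auto intro!: continuous_intros simp: cbox_interval)
  then show "((\<lambda>\<delta>. u1 h \<delta> j s) \<longlongrightarrow> u1 h 0 j s) (at_right 0)"
    and "((\<lambda>\<delta>. u2 h \<delta> j s) \<longlongrightarrow> u2 h 0 j s) (at_right 0)"
    using b unfolding continuous_on_def at_within_Icc_at_right[OF b, symmetric] by auto
qed

lemma At_eq_u:
  assumes "0 < m" and "0 < eps"
  shows "At1 (of_int j * eps) (of_int s * eps) m eps = u1 (m * eps) 0 j s"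
    and "At2 (of_int j * eps) (of_int s * eps) m eps = u2 (m * eps) 0 j s"
proof -
  have h: "0 < m * eps" using assms by simp
  define b where "b = m * eps / (2 * (1 + m * eps))"
  have "0 < b" unfolding b_def using h by simp
  then have "eventually (\<lambda>\<delta>. 0 < \<delta> \<and> \<delta> < b) (at_right 0)"
    using eventually_at_right_real eventually_at_right_less[of 0] by (auto elim: eventually_elim2)
  then have "eventually (\<lambda>\<delta>. admissible (m * eps) \<delta> \<and> 0 < \<delta>) (at_right 0)"
    by eventually_elim (use admissible_if_small[OF h] in \<open>auto simp: b_def\<close>)
  then have "eventually (\<lambda>\<delta>. u1 (m * eps) \<delta> j s = A1 (of_int j * eps) (of_int s * eps) m eps \<delta>
      \<and> u2 (m * eps) \<delta> j s = A2 (of_int j * eps) (of_int s * eps) m eps \<delta>) (at_right 0)"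
    by eventually_elim (use assms(2) in \<open>simp add: A_eq_Asol Asol_even\<close>)
  then show "At1 (of_int j * eps) (of_int s * eps) m eps = u1 (m * eps) 0 j s"
    and "At2 (of_int j * eps) (of_int s * eps) m eps = u2 (m * eps) 0 j s"
    unfolding At1_def At2_def
    using u_tendsto_delta_0[OF h, of j s]
    by (auto intro!: tendsto_Lim trivial_limit_at_right_real
        elim: tendsto_cong[THEN iffD1, rotated] eventually_mono)
qed

section \<open>The explicit transform at \<open>\<delta> = 0\<close>\<close>

lemma admissible_0: "0 < h \<Longrightarrow> admissible h 0"
  by (simp add: admissible_def)

definition W0 :: "real \<Rightarrow> real \<Rightarrow> real" where
  "W0 h k = sqrt (1 - (kap h 0)\<^sup>2 * (cos k)\<^sup>2)"

lemma W0_radicand_pos: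
  assumes "0 < h"
  shows "0 < 1 - (kap h 0)\<^sup>2 * (cos k)\<^sup>2"
proof -
  have "(kap h 0)\<^sup>2 * (cos k)\<^sup>2 \<le> (kap h 0)\<^sup>2"
    using abs_cos_le_one[of k] by (intro mult_left_le) (auto simp: abs_square_le_1)
  then show ?thesis using kap_square_less_1[OF admissible_0[OF assms]] by linarith
qed

lemma W0_pos: "0 < h \<Longrightarrow> 0 < W0 h k"
  unfolding W0_def using W0_radicand_pos by simp

lemma W0_square: "0 < h \<Longrightarrow> (W0 h k)\<^sup>2 = 1 - (kap h 0)\<^sup>2 * (cos k)\<^sup>2"
  unfolding W0_def using W0_radicand_pos[of h k] by simp

lemma zeta_delta_0: "zeta h 0 k = of_real (kap h 0 * cos k)"
  unfolding zeta_def by simp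

lemma omega_delta_0:
  assumes "0 < h"
  shows "omega h 0 k = of_real (W0 h k)"
proof -
  have "1 - (zeta h 0 k)\<^sup>2 = of_real (1 - (kap h 0)\<^sup>2 * (cos k)\<^sup>2)"
    unfolding zeta_delta_0 by (simp add: power_mult_distrib)
  then show ?thesis
    unfolding omega_def W0_def using W0_radicand_pos[OF assms, of k] by (simp add: csqrt_of_real)
qed

lemma lam_delta_0: "0 < h \<Longrightarrow> lam h 0 k = of_real (kap h 0 * cos k) - \<i> * of_real (W0 h k)"
  and mu_delta_0: "0 < h \<Longrightarrow> mu h 0 k = of_real (kap h 0 * cos k) + \<i> * of_real (W0 h k)"
  unfolding lam_def mu_def zeta_delta_0 by (simp_all add: omega_delta_0)

definition Af :: "real \<Rightarrow> real \<Rightarrow> real" where "Af h k = kap h 0 * sin k / W0 h k"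
definition Bf :: "real \<Rightarrow> real \<Rightarrow> real" where "Bf h k = kap h 0 * h / W0 h k"

lemma X_delta_0:
  assumes "0 < h"
  shows "X1 h 0 k = \<i> * of_real (Bf h k)"
    and "X2 h 0 k = of_real (Af h k) + 1"
    and "Y2 h 0 k = of_real (Af h k) - 1"
proof -
  have W: "W0 h k \<noteq> 0" using W0_pos[OF assms, of k] by simp
  have cis: "cis (- k) = of_real (cos k) - \<i> * of_real (sin k)" by (simp add: complex_eq_iff)
  have diff: "tm22 h 0 k - mu h 0 k = - \<i> * of_real (kap h 0 * sin k) - \<i> * of_real (W0 h k)"
    "tm22 h 0 k - lam h 0 k = - \<i> * of_real (kap h 0 * sin k) + \<i> * of_real (W0 h k)"
    unfolding tm22_def lam_delta_0[OF assms] mu_delta_0[OF assms] cis by (simp_all add: algebra_simps)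
  show "X1 h 0 k = \<i> * of_real (Bf h k)" "X2 h 0 k = of_real (Af h k) + 1"
    "Y2 h 0 k = of_real (Af h k) - 1"
    using W unfolding X1_def X2_def Y2_def diff omega_delta_0[OF assms] tm12_def Af_def Bf_def
    by (simp_all add: field_simps)
qed

definition sg :: "int \<Rightarrow> complex" where "sg s = (if 0 \<le> s then 1 else -1)"

lemma Fh_delta_0:
  assumes "0 < h"
  shows "Fh1 h 0 s k = lam h 0 k ^ nat \<bar>s\<bar> * (\<i> * of_real (Bf h k))"
    and "Fh2 h 0 s k = lam h 0 k ^ nat \<bar>s\<bar> * (of_real (Af h k) + sg s)"
  unfolding Fh1_def Fh2_def X_delta_0[OF assms] sg_def by simp_all

definition dW0 :: "real \<Rightarrow> real \<Rightarrow> real" where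
  "dW0 h k = (kap h 0)\<^sup>2 * cos k * sin k / W0 h k"
definition dAf :: "real \<Rightarrow> real \<Rightarrow> real" where
  "dAf h k = kap h 0 * (cos k * W0 h k - sin k * dW0 h k) / (W0 h k)\<^sup>2"
definition dBf :: "real \<Rightarrow> real \<Rightarrow> real" where
  "dBf h k = - kap h 0 * h * dW0 h k / (W0 h k)\<^sup>2"

lemma W0_has_field_derivative:
  assumes "0 < h"
  shows "(W0 h has_field_derivative dW0 h k) (at k within S)"
proof -
  have "((\<lambda>k. 1 - (kap h 0)\<^sup>2 * (cos k)\<^sup>2) has_field_derivative (2 * (kap h 0)\<^sup>2 * cos k * sin k))
      (at k within S)"
    by (auto intro!: derivative_eq_intros simp: power2_eq_square algebra_simps)
  from DERIV_chain2[OF DERIV_real_sqrt[OF W0_radicand_pos[OF assms]] this]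
  have "(W0 h has_field_derivative
      (inverse (sqrt (1 - (kap h 0)\<^sup>2 * (cos k)\<^sup>2)) / 2 * (2 * (kap h 0)\<^sup>2 * cos k * sin k)))
      (at k within S)"
    unfolding W0_def[abs_def] .
  moreover have "inverse (sqrt (1 - (kap h 0)\<^sup>2 * (cos k)\<^sup>2)) / 2 * (2 * (kap h 0)\<^sup>2 * cos k * sin k)
      = dW0 h k"
    unfolding dW0_def W0_def by (simp add: field_simps)
  ultimately show ?thesis by simp
qed

lemma Af_has_field_derivative:
  assumes "0 < h"
  shows "(Af h has_field_derivative dAf h k) (at k within S)"
proof -
  have "((\<lambda>k. kap h 0 * sin k / W0 h k) has_field_derivative dAf h k) (at k within S)"
    by (rule derivative_eq_intros W0_has_field_derivative[OF assms] refl)+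
      (use W0_pos[OF assms, of k] in \<open>auto simp: dAf_def field_simps power2_eq_square\<close>)
  then show ?thesis unfolding Af_def[abs_def] .
qed

lemma Bf_has_field_derivative:
  assumes "0 < h"
  shows "(Bf h has_field_derivative dBf h k) (at k within S)"
proof -
  have "((\<lambda>k. kap h 0 * h / W0 h k) has_field_derivative dBf h k) (at k within S)"
    by (rule derivative_eq_intros W0_has_field_derivative[OF assms] refl)+
      (use W0_pos[OF assms, of k] in \<open>auto simp: dBf_def field_simps power2_eq_square\<close>)
  then show ?thesis unfolding Bf_def[abs_def] .
qed

lemma lam_delta_0_has_vector_derivative:
  assumes "0 < h"
  shows "(lam h 0 has_vector_derivative (- \<i> * of_real (Af h k) * lam h 0 k)) (at k within S)"
proof -
  have "((\<lambda>k. of_real (kap h 0 * cos k) - \<i> * of_real (W0 h k)) has_vector_derivative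
        (of_real (- kap h 0 * sin k) - \<i> * of_real (dW0 h k))) (at k within S)"
    by (intro has_vector_derivative_diff has_vector_derivative_mult_right
        has_vector_derivative_of_real W0_has_field_derivative[OF assms])
      (auto intro!: derivative_eq_intros)
  moreover have "of_real (- kap h 0 * sin k) - \<i> * of_real (dW0 h k)
      = - \<i> * of_real (Af h k) * (of_real (kap h 0 * cos k) - \<i> * of_real (W0 h k))"
    unfolding Af_def dW0_def using W0_pos[OF assms, of k]
    by (simp add: complex_eq_iff field_simps power2_eq_square)
  moreover have "lam h 0 = (\<lambda>k. of_real (kap h 0 * cos k) - \<i> * of_real (W0 h k))"
    using lam_delta_0[OF assms] by auto
  ultimately show ?thesis by simp
qed

lemma lam_delta_0_power_has_vector_derivative:
  assumes "0 < h"
  shows "((\<lambda>k. lam h 0 k ^ n) has_vector_derivative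
           (of_nat n * (- \<i> * of_real (Af h k)) * lam h 0 k ^ n)) (at k within S)"
proof (induction n)
  case 0
  then show ?case by (simp add: has_vector_derivative_const)
next
  case (Suc n)
  from has_vector_derivative_mult[OF lam_delta_0_has_vector_derivative[OF assms] Suc.IH]
  show ?case by (simp add: algebra_simps)
qed

definition dFh1 :: "real \<Rightarrow> int \<Rightarrow> real \<Rightarrow> complex" where
  "dFh1 h s k = lam h 0 k ^ nat \<bar>s\<bar> *
     (of_nat (nat \<bar>s\<bar>) * (- \<i> * of_real (Af h k)) * (\<i> * of_real (Bf h k)) + \<i> * of_real (dBf h k))"
definition dFh2 :: "real \<Rightarrow> int \<Rightarrow> real \<Rightarrow> complex" where
  "dFh2 h s k = lam h 0 k ^ nat \<bar>s\<bar> *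
     (of_nat (nat \<bar>s\<bar>) * (- \<i> * of_real (Af h k)) * (of_real (Af h k) + sg s) + of_real (dAf h k))"

lemma Fh_delta_0_has_vector_derivative:
  assumes "0 < h"
  shows "(Fh1 h 0 s has_vector_derivative dFh1 h s k) (at k within S)"
    and "(Fh2 h 0 s has_vector_derivative dFh2 h s k) (at k within S)"
proof -
  note pow = lam_delta_0_power_has_vector_derivative[OF assms]
  have "((\<lambda>k. lam h 0 k ^ nat \<bar>s\<bar> * (\<i> * of_real (Bf h k))) has_vector_derivative
      (lam h 0 k ^ nat \<bar>s\<bar> * (\<i> * of_real (dBf h k))
       + of_nat (nat \<bar>s\<bar>) * (- \<i> * of_real (Af h k)) * lam h 0 k ^ nat \<bar>s\<bar> * (\<i> * of_real (Bf h k))))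
      (at k within S)"
    by (intro has_vector_derivative_mult pow has_vector_derivative_mult_right
        has_vector_derivative_of_real Bf_has_field_derivative[OF assms])
  moreover have "((\<lambda>k. lam h 0 k ^ nat \<bar>s\<bar> * (of_real (Af h k) + sg s)) has_vector_derivative
      (lam h 0 k ^ nat \<bar>s\<bar> * (of_real (dAf h k) + 0)
       + of_nat (nat \<bar>s\<bar>) * (- \<i> * of_real (Af h k)) * lam h 0 k ^ nat \<bar>s\<bar> * (of_real (Af h k) + sg s)))
      (at k within S)"
    by (intro has_vector_derivative_mult pow has_vector_derivative_add has_vector_derivative_of_real
        Af_has_field_derivative[OF assms] has_vector_derivative_const)
  moreover have "Fh1 h 0 s = (\<lambda>k. lam h 0 k ^ nat \<bar>s\<bar> * (\<i> * of_real (Bf h k)))"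
    "Fh2 h 0 s = (\<lambda>k. lam h 0 k ^ nat \<bar>s\<bar> * (of_real (Af h k) + sg s))"
    using Fh_delta_0[OF assms] by auto
  ultimately show "(Fh1 h 0 s has_vector_derivative dFh1 h s k) (at k within S)"
    and "(Fh2 h 0 s has_vector_derivative dFh2 h s k) (at k within S)"
    unfolding dFh1_def dFh2_def by (simp_all add: algebra_simps)
qed

lemma continuous_on_dFh:
  assumes "0 < h"
  shows "continuous_on S (dFh1 h s)" and "continuous_on S (dFh2 h s)"
proof -
  have "continuous_on S (W0 h)" unfolding W0_def[abs_def] by (intro continuous_intros)
  moreover have "lam h 0 = (\<lambda>k. of_real (kap h 0 * cos k) - \<i> * of_real (W0 h k))"
    using lam_delta_0[OF assms] by auto
  ultimately show "continuous_on S (dFh1 h s)" and "continuous_on S (dFh2 h s)"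
    unfolding dFh1_def[abs_def] dFh2_def[abs_def] Af_def Bf_def dAf_def dBf_def dW0_def
    using W0_pos[OF assms] by (auto intro!: continuous_intros simp: less_imp_neq[symmetric])
qed

lemma Fh_delta_0_periodic:
  assumes "0 < h"
  shows "Fh1 h 0 s (- pi) = Fh1 h 0 s pi" and "Fh2 h 0 s (- pi) = Fh2 h 0 s pi"
  unfolding Fh_delta_0[OF assms] lam_delta_0[OF assms] Af_def Bf_def W0_def by simp_all

lemma fourier_coeff_dFh:
  assumes "0 < h"
  shows "fourier_coeff (dFh1 h s) j = - \<i> * of_int j * u1 h 0 j s"
    and "fourier_coeff (dFh2 h s) j = - \<i> * of_int j * u2 h 0 j s"
proof -
  note cont = continuous_on_Fh[OF admissible_0[OF assms]]
  have "of_int j * u1 h 0 j s = \<i> * fourier_coeff (dFh1 h s) j"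
    "of_int j * u2 h 0 j s = \<i> * fourier_coeff (dFh2 h s) j"
    unfolding u1_def u2_def
    by (rule fourier_coeff_deriv[OF Fh_delta_0_has_vector_derivative(1)[OF assms]
          continuous_on_dFh(1)[OF assms] cont(1) Fh_delta_0_periodic(1)[OF assms]],
        rule fourier_coeff_deriv[OF Fh_delta_0_has_vector_derivative(2)[OF assms]
          continuous_on_dFh(2)[OF assms] cont(2) Fh_delta_0_periodic(2)[OF assms]])
  then show "fourier_coeff (dFh1 h s) j = - \<i> * of_int j * u1 h 0 j s"
    and "fourier_coeff (dFh2 h s) j = - \<i> * of_int j * u2 h 0 j s"
    by (simp_all add: algebra_simps)
qed

lemma W0_square_eq: "0 < h \<Longrightarrow> (W0 h k)\<^sup>2 = (kap h 0)\<^sup>2 * ((sin k)\<^sup>2 + h\<^sup>2)"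
  using W0_square[of h k] kap_square[OF admissible_0, of h] by (simp add: sin_squared_eq algebra_simps)

lemma Af_square_plus_Bf_square:
  assumes "0 < h"
  shows "(Af h k)\<^sup>2 + (Bf h k)\<^sup>2 = 1"
proof -
  have "(Af h k)\<^sup>2 + (Bf h k)\<^sup>2 = (kap h 0)\<^sup>2 * ((sin k)\<^sup>2 + h\<^sup>2) / (W0 h k)\<^sup>2"
    unfolding Af_def Bf_def by (simp add: power_divide power_mult_distrib add_divide_distrib algebra_simps)
  then show ?thesis
    using W0_square_eq[OF assms, of k] W0_pos[OF assms, of k] kap_pos[OF admissible_0[OF assms]] assms
    by simp
qed

lemma h_mult_Af: "h * Af h k = sin k * Bf h k"
  unfolding Af_def Bf_def by (simp add: field_simps)

lemma h_mult_dBf: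
  assumes "0 < h"
  shows "h * dBf h k = - sin k * dAf h k"
proof -
  have "(h\<^sup>2 + (sin k)\<^sup>2) * dW0 h k = ((kap h 0)\<^sup>2 * ((sin k)\<^sup>2 + h\<^sup>2)) * cos k * sin k / W0 h k"
    unfolding dW0_def by (simp add: algebra_simps)
  also have "\<dots> = sin k * cos k * W0 h k"
    using W0_pos[OF assms, of k] unfolding W0_square_eq[OF assms, symmetric]
    by (simp add: power2_eq_square)
  finally have "kap h 0 * ((h\<^sup>2 + (sin k)\<^sup>2) * dW0 h k) = kap h 0 * (sin k * cos k * W0 h k)"
    by simp
  then have num: "h * (- kap h 0 * h * dW0 h k) = - sin k * (kap h 0 * (cos k * W0 h k - sin k * dW0 h k))"
    by (simp add: algebra_simps power2_eq_square)
  have "h * dBf h k = (h * (- kap h 0 * h * dW0 h k)) / (W0 h k)\<^sup>2"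
    unfolding dBf_def by simp
  also have "\<dots> = - sin k * dAf h k"
    unfolding num dAf_def by simp
  finally show ?thesis .
qed

lemma h_mult_dAf: "0 < h \<Longrightarrow> h * dAf h k = sin k * dBf h k + cos k * Bf h k"
  unfolding dAf_def dBf_def Bf_def using W0_pos[of h k] by (simp add: field_simps power2_eq_square)

text \<open>Ring identities behind \<open>dFh_identity\<close>; the imaginary unit is abstracted to a root
  \<open>i\<close> of \<open>i\<^sup>2 = -1\<close> so that \<open>algebra\<close> applies.\<close>
lemma dFh_identity_ring:
  fixes i h A B dA dB S C n g :: complex
  assumes "i * i = -1" and "g * g = 1" and "h * A = S * B"
  shows "A * A + B * B = 1 \<Longrightarrow> h * dB = - S * dA \<Longrightarrow>
      h * (n * (- i * A) * (i * B) + i * dB) = (- i * S) * (n * (- i * A) * (A + g) + dA) + (g * n) * S * (A + g)"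
    and "h * dA = S * dB + C * B \<Longrightarrow>
      i * h * (n * (- i * A) * (A + g) + dA) = S * (n * (- i * A) * (i * B) + i * dB) + (C - i * (g * n) * S) * (i * B)"
  using assms by algebra+

lemma sg_mult_nat_abs: "sg s * of_nat (nat \<bar>s\<bar>) = of_int s"
  unfolding sg_def by simp

lemma dFh_identity:
  assumes "0 < h"
  shows "of_real h * dFh1 h s k = - \<i> * of_real (sin k) * dFh2 h s k + of_int s * of_real (sin k) * Fh2 h 0 s k"
    and "\<i> * of_real h * dFh2 h s k
       = of_real (sin k) * dFh1 h s k + (of_real (cos k) - \<i> * of_int s * of_real (sin k)) * Fh1 h 0 s k"
proof -
  define L n where "L = lam h 0 k ^ nat \<bar>s\<bar>" and "n = (of_nat (nat \<bar>s\<bar>) :: complex)"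
  have "of_real (Af h k) * of_real (Af h k) + of_real (Bf h k) * of_real (Bf h k) = (1 :: complex)"
    using Af_square_plus_Bf_square[OF assms, of k] by (metis of_real_1 of_real_add of_real_mult power2_eq_square)
  moreover have "of_real h * of_real (Af h k) = of_real (sin k) * (of_real (Bf h k) :: complex)"
    using h_mult_Af[of h k] by (metis of_real_mult)
  moreover have "of_real h * of_real (dBf h k) = - of_real (sin k) * (of_real (dAf h k) :: complex)"
    using h_mult_dBf[OF assms, of k] by (metis of_real_minus of_real_mult)
  moreover have "of_real h * of_real (dAf h k)
      = of_real (sin k) * of_real (dBf h k) + of_real (cos k) * (of_real (Bf h k) :: complex)"
    using h_mult_dAf[OF assms, of k] by (metis of_real_add of_real_mult)
  moreover have "sg s * sg s = 1" unfolding sg_def by simp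
  ultimately have E:
    "of_real h * (n * (- \<i> * of_real (Af h k)) * (\<i> * of_real (Bf h k)) + \<i> * of_real (dBf h k))
      = (- \<i> * of_real (sin k)) * (n * (- \<i> * of_real (Af h k)) * (of_real (Af h k) + sg s) + of_real (dAf h k))
        + (sg s * n) * of_real (sin k) * (of_real (Af h k) + sg s)"
    "\<i> * of_real h * (n * (- \<i> * of_real (Af h k)) * (of_real (Af h k) + sg s) + of_real (dAf h k))
      = of_real (sin k) * (n * (- \<i> * of_real (Af h k)) * (\<i> * of_real (Bf h k)) + \<i> * of_real (dBf h k))
        + (of_real (cos k) - \<i> * (sg s * n) * of_real (sin k)) * (\<i> * of_real (Bf h k))"
    using dFh_identity_ring[of \<i> "sg s" "of_real h"] by simp_all
  show "of_real h * dFh1 h s k = - \<i> * of_real (sin k) * dFh2 h s k + of_int s * of_real (sin k) * Fh2 h 0 s k"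
    using arg_cong[OF E(1), of "\<lambda>x. L * x"]
    unfolding dFh1_def dFh2_def Fh_delta_0[OF assms] L_def n_def sg_mult_nat_abs[symmetric]
    by (simp add: algebra_simps)
  show "\<i> * of_real h * dFh2 h s k
       = of_real (sin k) * dFh1 h s k + (of_real (cos k) - \<i> * of_int s * of_real (sin k)) * Fh1 h 0 s k"
    using arg_cong[OF E(2), of "\<lambda>x. L * x"]
    unfolding dFh1_def dFh2_def Fh_delta_0[OF assms] L_def n_def sg_mult_nat_abs[symmetric]
    by (simp add: algebra_simps)
qed

lemma u_identity_ring:
  fixes i h D1 D2p D2m D2 D1p D1m U U2p U2m V V1p V1m s j :: complex
  assumes "i * i = -1"
  shows "h * D1 = (- 1 / 2) * D2p + 1 / 2 * D2m + (- i * s / 2) * U2p + (i * s / 2) * U2m \<Longrightarrow>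
      D1 = - i * j * U \<Longrightarrow> D2p = - i * (j + 1) * U2p \<Longrightarrow> D2m = - i * (j - 1) * U2m \<Longrightarrow>
      2 * h * j * U = (j - s - 1) * U2m - (j - s + 1) * U2p"
    and "i * h * D2 = (- i / 2) * D1p + (i / 2) * D1m + (1 / 2 - s / 2) * V1p + (1 / 2 + s / 2) * V1m \<Longrightarrow>
      D2 = - i * j * V \<Longrightarrow> D1p = - i * (j + 1) * V1p \<Longrightarrow> D1m = - i * (j - 1) * V1m \<Longrightarrow>
      2 * h * j * V = (j + s) * (V1m - V1p)"
  using assms by algebra+

lemma sin_cos_stencil:
  "- \<i> * of_real (sin k) = (- 1 / 2) * cis k + 0 + 1 / 2 * cis (- k)"
  "of_int s * of_real (sin k) = (- \<i> * of_int s / 2) * cis k + 0 + (\<i> * of_int s / 2) * cis (- k)"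
  "of_real (sin k) = (- \<i> / 2) * cis k + 0 + (\<i> / 2) * cis (- k)"
  "of_real (cos k) - \<i> * of_int s * of_real (sin k)
     = (1 / 2 - of_int s / 2) * cis k + 0 + (1 / 2 + of_int s / 2) * cis (- k)"
  by (simp_all add: complex_eq_iff algebra_simps)

lemma u_delta_0_identity1:
  assumes "0 < h"
  shows "2 * of_real h * of_int j * u1 h 0 j s
       = (of_int j - of_int s - 1) * u2 h 0 (j - 1) s - (of_int j - of_int s + 1) * u2 h 0 (j + 1) s"
proof -
  note c = continuous_on_Fh(2)[OF admissible_0[OF assms], of "{-pi..pi}" s]
    and dc = continuous_on_dFh(2)[OF assms, of "{-pi..pi}" s]
  have "of_real h * fourier_coeff (dFh1 h s) j = fourier_coeff (\<lambda>k. of_real h * dFh1 h s k) j"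
    by (simp add: fourier_coeff_cmult)
  also have "\<dots> = fourier_coeff (\<lambda>k. ((- 1 / 2) * cis k + 0 + 1 / 2 * cis (- k)) * dFh2 h s k
      + ((- \<i> * of_int s / 2) * cis k + 0 + (\<i> * of_int s / 2) * cis (- k)) * Fh2 h 0 s k) j"
    unfolding dFh_identity(1)[OF assms] sin_cos_stencil(1,2) ..
  also have "\<dots> = (- 1 / 2) * fourier_coeff (dFh2 h s) (j + 1) + 1 / 2 * fourier_coeff (dFh2 h s) (j - 1)
      + (- \<i> * of_int s / 2) * u2 h 0 (j + 1) s + (\<i> * of_int s / 2) * u2 h 0 (j - 1) s"
    by (subst fourier_coeff_add, (intro continuous_intros c dc)+)
      (unfold fourier_coeff_stencil[OF c] fourier_coeff_stencil[OF dc] u2_def, simp)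
  finally show ?thesis
    using fourier_coeff_dFh[OF assms, of s] by (intro u_identity_ring(1)[of \<i>]) simp_all
qed

lemma u_delta_0_identity2:
  assumes "0 < h"
  shows "2 * of_real h * of_int j * u2 h 0 j s = (of_int j + of_int s) * (u1 h 0 (j - 1) s - u1 h 0 (j + 1) s)"
proof -
  note c = continuous_on_Fh(1)[OF admissible_0[OF assms], of "{-pi..pi}" s]
    and dc = continuous_on_dFh(1)[OF assms, of "{-pi..pi}" s]
  have "\<i> * of_real h * fourier_coeff (dFh2 h s) j = fourier_coeff (\<lambda>k. \<i> * of_real h * dFh2 h s k) j"
    by (simp add: fourier_coeff_cmult)
  also have "\<dots> = fourier_coeff (\<lambda>k. ((- \<i> / 2) * cis k + 0 + (\<i> / 2) * cis (- k)) * dFh1 h s k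
      + ((1 / 2 - of_int s / 2) * cis k + 0 + (1 / 2 + of_int s / 2) * cis (- k)) * Fh1 h 0 s k) j"
    unfolding dFh_identity(2)[OF assms] sin_cos_stencil(4) unfolding sin_cos_stencil(3) ..
  also have "\<dots> = (- \<i> / 2) * fourier_coeff (dFh1 h s) (j + 1) + (\<i> / 2) * fourier_coeff (dFh1 h s) (j - 1)
      + (1 / 2 - of_int s / 2) * u1 h 0 (j + 1) s + (1 / 2 + of_int s / 2) * u1 h 0 (j - 1) s"
    by (subst fourier_coeff_add, (intro continuous_intros c dc)+)
      (unfold fourier_coeff_stencil[OF c] fourier_coeff_stencil[OF dc] u1_def, simp)
  finally show ?thesis
    using fourier_coeff_dFh[OF assms, of s] by (intro u_identity_ring(2)[of \<i>]) simp_all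
qed

theorem proposition10:
  fixes m eps x t :: real
  assumes "m > 0" and "eps > 0"
    and "x / eps \<in> \<int>" and "t / eps \<in> \<int>"
  shows "of_real (2 * m * eps * x) * At1 x t m eps =
           of_real (x - t - eps) * At2 (x - eps) t m eps
         - of_real (x - t + eps) * At2 (x + eps) t m eps
     \<and> of_real (2 * m * eps * x) * At2 x t m eps =
           of_real (x + t) * At1 (x - eps) t m eps
         - of_real (x + t) * At1 (x + eps) t m eps"
proof -
  obtain j s :: int where x: "x = of_int j * eps" and t: "t = of_int s * eps"
    using assms(2-4) by (auto elim!: Ints_cases simp: divide_eq_eq)
  have shifted: "x - eps = of_int (j - 1) * eps" "x + eps = of_int (j + 1) * eps"
    unfolding x by (simp_all add: algebra_simps)
  have "0 < m * eps" using assms(1,2) by simp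
  note identities = arg_cong[OF u_delta_0_identity1[OF this, of j s], of "\<lambda>z. of_real eps * z"]
    arg_cong[OF u_delta_0_identity2[OF this, of j s], of "\<lambda>z. of_real eps * z"]
  show ?thesis
    unfolding shifted unfolding x t At_eq_u[OF assms(1,2)]
    using identities by (simp add: algebra_simps)
qed

end
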